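(* Assume the setting described in the context. Let $\rho(\mu):=\min_{a\in A^-}I_{a^*,a}(\hat L_a(a))$. Then under both general and binary contracts, $$C^{\mathrm{SB}}_n(\mu,a^*,u,c)-C^{\mathrm{FB}}(u,c,a^* )=\exp[-\rho(\mu)n+o(n)],\qquad C^{\mathrm{bin}}_n(\mu,a^*,u,c)-C^{\mathrm{FB}}(u,c,a^* )=\exp[-\rho(\mu)n+o(n)].$$
   Context: Finite action set $A$, target $a^*\in A$. A measurable signal space $Z$ with a $\sigma$-finite measure $\nu$. A sequence $\mu=(\mu^n)_n$ of monitoring technologies: for each $n$ and $a\in A$, $\mu^n_a$ is a probability measure on $Z$, absolutely continuous w.r.t. $\nu$ with density $g^n_a$. For $a'\in A\setminus\{a^*\}$, the score $L_n(a')=\frac1n\log\frac{g^n_{a^*}(z)}{g^n_{a'}(z)}$ is well-defined $\mu^n_a$-almost surely for every $a\in A$; $\mathbb{P}_a$ denotes probability under $\mu^n_a$. Large deviations: for each $a\in A$, $a'\neq a^*$ there is $I_{a,a'}:\mathbb{R}\to[0,\infty]$ such that for every measurable $B\subseteq\mathbb{R}$, $-\inf_{\ell\in\mathrm{int}B}I_{a,a'}(\ell)\le\liminf_n\frac1n\log\mathbb{P}_a[L_n(a')\in B]\le\limsup_n\frac1n\log\mathbb{P}_a[L_n(a')\in B]\le-\inf_{\ell\in\mathrm{cl}B}I_{a,a'}(\ell)$. Identification: $I_{a,a'}$ has a unique minimizer $\hat L_a(a')$, and $\hat L_a(a')\neq\hat L_{\tilde a}(a')$ for $a\neq\tilde a$.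 Regularity: each $I_{a,a'}$ has compact level sets, and $I_{a^*,a'}$ is continuous at $\hat L_{a'}(a')$ and at $\hat L_{a^*}(a')$. Payoffs: $\underline w\in\mathbb{R}$; $u:[\underline w,\infty)\to\mathbb{R}$ is $C^2$, $u'>0$, $u''<0$, $\lim_{w\to\infty}u'(w)=0$; $c:A\to\mathbb{R}$ with $c(A)\subseteq\mathrm{int}\,u([\underline w,\infty))$, $c(a^* )>c(a)$ for some $a$ and $c(a^* )\neq c(a)$ for all $a\neq a^*$; outside option $0$; $h=u^{-1}$. A contract $w:Z\to[\underline w,\infty)$ satisfies (IC) if $\int u(w)d\mu^n_{a^*}-c(a^* )\ge\int u(w)d\mu^n_a-c(a)$ for all $a\in A$ and (IR) if $\int u(w)d\mu^n_{a^*}-c(a^* )\ge0$. $C^{\mathrm{SB}}_n(\mu,a^*,u,c)$ is the infimum of $\int w\,d\mu^n_{a^*}$ over contracts satisfying (IC),(IR), and $C^{\mathrm{bin}}_n$ the same over contracts taking exactly two values. First-best cost $C^{\mathrm{FB}}(u,c,a^* )=h(c(a^* ))$. $A^-=\{a:c(a)<c(a^* )\}$. $f(n)=\exp[-rn+o(n)]$ means $\frac1n\log f(n)\to-r$. *)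

theory Defs
  imports "HOL-Probability.Probability"
begin

definition mon :: "'z measure \<Rightarrow> (nat \<Rightarrow> 'a \<Rightarrow> 'z \<Rightarrow> real) \<Rightarrow> nat \<Rightarrow> 'a \<Rightarrow> 'z measure" where
  "mon nu g n a = density nu (\<lambda>z. ennreal (g n a z))"

definition score :: "(nat \<Rightarrow> 'a \<Rightarrow> 'z \<Rightarrow> real) \<Rightarrow> 'a \<Rightarrow> nat \<Rightarrow> 'a \<Rightarrow> 'z \<Rightarrow> real" where
  "score g astar n a' z = ln (g n astar z / g n a' z) / real n"

definition eln :: "real \<Rightarrow> ereal" where
  "eln x = (if x \<le> 0 then -\<infinity> else ereal (ln x))"

definition ld_rate :: "'z measure \<Rightarrow> (nat \<Rightarrow> 'a \<Rightarrow> 'z \<Rightarrow> real) \<Rightarrow> 'a \<Rightarrow> 'a \<Rightarrow> 'a \<Rightarrow> real set \<Rightarrow> nat \<Rightarrow> ereal" where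
  "ld_rate nu g astar a a' B n =
     ereal (1 / real n) * eln (measure (mon nu g n a) {z \<in> space nu. score g astar n a' z \<in> B})"

text \<open>Contracts satisfying (IC) and (IR); integrability conditions make the integrals meaningful
  (u(w) is bounded below, so its integral is never -infinity; if it is +infinity under some a,
   (IC) fails; contracts with infinite expected wage do not affect the infimum).\<close>
definition admissible ::
  "'z measure \<Rightarrow> (nat \<Rightarrow> 'a \<Rightarrow> 'z \<Rightarrow> real) \<Rightarrow> 'a set \<Rightarrow> 'a \<Rightarrow> real \<Rightarrow> (real \<Rightarrow> real)
     \<Rightarrow> ('a \<Rightarrow> real) \<Rightarrow> nat \<Rightarrow> ('z \<Rightarrow> real) \<Rightarrow> bool" where
  "admissible nu g A astar wlow u c n w \<longleftrightarrow>
     w \<in> borel_measurable nu \<and> (\<forall>z\<in>space nu. wlow \<le> w z) \<and>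
     integrable (mon nu g n astar) w \<and>
     (\<forall>a\<in>A. integrable (mon nu g n a) (\<lambda>z. u (w z))) \<and>
     (\<forall>a\<in>A. (\<integral>z. u (w z) \<partial>mon nu g n astar) - c astar \<ge> (\<integral>z. u (w z) \<partial>mon nu g n a) - c a) \<and>
     (\<integral>z. u (w z) \<partial>mon nu g n astar) - c astar \<ge> 0"

definition C_SB ::
  "'z measure \<Rightarrow> (nat \<Rightarrow> 'a \<Rightarrow> 'z \<Rightarrow> real) \<Rightarrow> 'a set \<Rightarrow> 'a \<Rightarrow> real \<Rightarrow> (real \<Rightarrow> real)
     \<Rightarrow> ('a \<Rightarrow> real) \<Rightarrow> nat \<Rightarrow> ereal" where
  "C_SB nu g A astar wlow u c n =
     (INF w \<in> {w. admissible nu g A astar wlow u c n w}. ereal (\<integral>z. w z \<partial>mon nu g n astar))"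

definition C_bin ::
  "'z measure \<Rightarrow> (nat \<Rightarrow> 'a \<Rightarrow> 'z \<Rightarrow> real) \<Rightarrow> 'a set \<Rightarrow> 'a \<Rightarrow> real \<Rightarrow> (real \<Rightarrow> real)
     \<Rightarrow> ('a \<Rightarrow> real) \<Rightarrow> nat \<Rightarrow> ereal" where
  "C_bin nu g A astar wlow u c n =
     (INF w \<in> {w. admissible nu g A astar wlow u c n w \<and> card (w ` space nu) = 2}.
        ereal (\<integral>z. w z \<partial>mon nu g n astar))"

definition C_FB :: "real \<Rightarrow> (real \<Rightarrow> real) \<Rightarrow> ('a \<Rightarrow> real) \<Rightarrow> 'a \<Rightarrow> real" where
  "C_FB wlow u c astar = inv_into {wlow..} u (c astar)"

text \<open>f(n) = exp[-r n + o(n)]: f(n) is eventually a positive real and (1/n) log f(n) tends to -r.\<close>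
definition exp_rate :: "(nat \<Rightarrow> ereal) \<Rightarrow> ereal \<Rightarrow> bool" where
  "exp_rate f r \<longleftrightarrow> (\<forall>\<^sub>F n in sequentially. 0 < f n \<and> f n < \<infinity>) \<and>
     ((\<lambda>n. ereal (ln (real_of_ereal (f n)) / real n)) \<longlonglongrightarrow> - r)"

end

theory Submission
  imports Defs
begin

text \<open>
  Changing measure from \<open>\<mu>\<^sup>n\<^sub>a\<close> to \<open>\<mu>\<^sup>n\<^sub>a\<^sub>*\<close> multiplies the probability of the
  event that the score \<open>L\<^sub>n(a)\<close> is close to \<open>l\<close> by \<open>exp(n l + o(n))\<close>. Under \<open>a\<close> the score
  concentrates at \<open>Lhat a a\<close> (compact level sets and a unique minimiser of the rate function), so
  under \<open>a\<^sub>*\<close> this event has probability \<open>exp(n Lhat a a + o(n))\<close>; comparing with the large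
  deviation bounds under \<open>a\<^sub>*\<close> gives \<open>I a\<^sub>* a (Lhat a a) = - Lhat a a > 0\<close>. Hence
  \<open>\<rho>(\<mu>) = - Lmax\<close>, where \<open>Lmax\<close> is the largest \<open>Lhat a a\<close> over the cheaper actions.

  Lower bound: for a cheaper action \<open>a\<close>, (IC) forces the wage below a fixed level
  \<open>w1 < h(c a\<^sub>*)\<close> with probability bounded away from zero under \<open>a\<close>, hence with probability
  at least \<open>exp(n (Lhat a a - \<delta>))\<close> under \<open>a\<^sub>*\<close>. Below \<open>w1\<close> the tangent of \<open>u\<close> at
  \<open>h(c a\<^sub>*)\<close> exceeds \<open>u\<close> by a fixed gap, so with (IR) this probability becomes excess cost.

  Upper bound: pay \<open>wlow\<close> on the union \<open>S\<close> of the typical score events of the cheaper actions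
  and a constant wage elsewhere, chosen so that (IR) binds. For large \<open>n\<close> every cheaper action
  lands in \<open>S\<close> with probability close to one, so deviating does not pay, and the cost exceeds
  \<open>h(c a\<^sub>*)\<close> by \<open>O(\<mu>\<^sup>n\<^sub>a\<^sub>*(S)) = O(exp(n (Lmax + \<delta>)))\<close>.
\<close>

section \<open>Exponential rates\<close>

lemma eventually_exp_less:
  fixes c e :: real
  assumes "c < 0" "0 < e"
  shows "eventually (\<lambda>n. exp (real n * c) < e) sequentially"
proof -
  obtain N :: nat where N: "ln e / c < real N" using reals_Archimedean2 by blast
  show ?thesis unfolding eventually_sequentially
  proof (intro exI allI impI)
    fix n assume "N \<le> n"
    then have "ln e / c < real n" using N by linarith
    then have "real n * c < ln e" using assms(1) by (simp add: divide_less_eq mult.commute)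
    then show "exp (real n * c) < e" using assms(2) by (metis exp_less_mono exp_ln)
  qed
qed

lemma eventually_const_mult_exp_le:
  fixes K x \<delta> :: real
  assumes "0 < K" "0 < \<delta>"
  shows "eventually (\<lambda>n. K * exp (real n * x) \<le> exp (real n * (x + \<delta>))) sequentially"
proof -
  have "eventually (\<lambda>n. exp (real n * (- \<delta>)) < 1 / K) sequentially"
    using assms by (intro eventually_exp_less) auto
  then show ?thesis
  proof eventually_elim
    case (elim n)
    then have "K * exp (real n * (- \<delta>)) \<le> 1" using assms(1) by (simp add: field_simps)
    then have "K * exp (real n * (- \<delta>)) * exp (real n * (x + \<delta>)) \<le> exp (real n * (x + \<delta>))" by simp
    then show ?case by (simp add: exp_add[symmetric] algebra_simps)
  qed
qed

lemma eventually_exp_le_const_mult: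
  fixes K x \<delta> :: real
  assumes "0 < K" "0 < \<delta>"
  shows "eventually (\<lambda>n. exp (real n * (x - \<delta>)) \<le> K * exp (real n * x)) sequentially"
  using eventually_const_mult_exp_le[of "1 / K" \<delta> "x - \<delta>"] assms
  by (simp add: field_simps)

lemma exponent_le_of_eventually_le:
  fixes K x y :: real
  assumes "0 < K" "eventually (\<lambda>n. K * exp (real n * x) \<le> exp (real n * y)) sequentially"
  shows "x \<le> y"
proof (rule ccontr)
  assume "\<not> x \<le> y"
  then have "eventually (\<lambda>n. exp (real n * (y - x)) < K) sequentially"
    using assms(1) by (intro eventually_exp_less) auto
  with assms(2) have "eventually (\<lambda>n. False) sequentially"
  proof eventually_elim
    case (elim n)
    then have "exp (real n * (y - x)) * exp (real n * x) < K * exp (real n * x)" by simp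
    then show False using elim(1) by (simp add: exp_add[symmetric] algebra_simps)
  qed
  then show False by simp
qed

lemma ln_div_between_of_exp_between:
  assumes "0 < n" "exp (real n * x) \<le> r" "r \<le> exp (real n * y)"
  shows "x \<le> ln r / real n" "ln r / real n \<le> y"
proof -
  have "0 < r" using assms(2) by (rule less_le_trans[OF exp_gt_zero])
  then have "real n * x \<le> ln r" "ln r \<le> real n * y"
    using assms(2,3) by (simp_all add: ln_ge_iff) (metis ln_exp ln_le_cancel_iff exp_gt_zero)
  then show "x \<le> ln r / real n" "ln r / real n \<le> y"
    using assms(1) by (simp_all add: le_divide_eq divide_le_eq mult.commute)
qed

lemma exp_rate_intro:
  fixes f :: "nat \<Rightarrow> ereal" and L d0 :: real
  assumes "0 < d0"
    and bounds: "\<And>\<delta>. 0 < \<delta> \<Longrightarrow> \<delta> < d0 \<Longrightarrow> eventually (\<lambda>n.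
        ereal (exp (real n * (L - \<delta>))) \<le> f n \<and> f n \<le> ereal (exp (real n * (L + \<delta>)))) sequentially"
  shows "exp_rate f (ereal (- L))"
  unfolding exp_rate_def
proof
  show "\<forall>\<^sub>F n in sequentially. 0 < f n \<and> f n < \<infinity>"
    using bounds[of "d0 / 2"] \<open>0 < d0\<close>
    by (auto elim!: eventually_mono intro: order.strict_trans2[of 0 "ereal (exp _)"])
  have "(\<lambda>n. ln (real_of_ereal (f n)) / real n) \<longlonglongrightarrow> L"
    unfolding tendsto_iff dist_real_def
  proof (intro allI impI)
    fix e :: real assume "0 < e"
    define \<delta> where "\<delta> = min (d0 / 2) (e / 2)"
    have "\<delta> \<le> d0 / 2" "\<delta> \<le> e / 2" unfolding \<delta>_def by (rule min.cobounded1, rule min.cobounded2)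
    moreover have "0 < \<delta>" using \<open>0 < d0\<close> \<open>0 < e\<close> by (simp add: \<delta>_def)
    ultimately have "0 < \<delta>" "\<delta> < d0" "\<delta> < e" using \<open>0 < d0\<close> \<open>0 < e\<close> by argo+
    show "eventually (\<lambda>n. \<bar>ln (real_of_ereal (f n)) / real n - L\<bar> < e) sequentially"
      using bounds[OF \<open>0 < \<delta>\<close> \<open>\<delta> < d0\<close>] eventually_gt_at_top[of 0]
    proof eventually_elim
      case (elim n)
      obtain r where r: "f n = ereal r" "exp (real n * (L - \<delta>)) \<le> r" "r \<le> exp (real n * (L + \<delta>))"
        using elim(1) by (cases "f n") auto
      then have "L - \<delta> \<le> ln r / real n" "ln r / real n \<le> L + \<delta>"
        using ln_div_between_of_exp_between[OF elim(2)] by blast+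
      then show ?case using r(1) \<open>\<delta> < e\<close> by (simp add: abs_less_iff)
    qed
  qed
  then show "(\<lambda>n. ereal (ln (real_of_ereal (f n)) / real n)) \<longlonglongrightarrow> - ereal (- L)"
    by simp
qed

lemma exp_rate_of_bounds:
  fixes f :: "nat \<Rightarrow> ereal" and w0 L d0 :: real
  assumes "0 < d0"
    and lower: "\<And>\<delta>. 0 < \<delta> \<Longrightarrow>
        \<exists>K>0. eventually (\<lambda>n. ereal (w0 + K * exp (real n * (L - \<delta>))) \<le> f n) sequentially"
    and upper: "\<And>\<delta>. 0 < \<delta> \<Longrightarrow> \<delta> < d0 \<Longrightarrow>
        \<exists>K>0. eventually (\<lambda>n. f n \<le> ereal (w0 + K * exp (real n * (L + \<delta>)))) sequentially"
  shows "exp_rate (\<lambda>n. f n - ereal w0) (ereal (- L))"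
proof (rule exp_rate_intro[OF \<open>0 < d0\<close>])
  fix \<delta> :: real assume "0 < \<delta>" "\<delta> < d0"
  then have "0 < \<delta> / 2" by simp
  obtain K1 K2 where "0 < K1" "0 < K2"
    and f_lower: "eventually (\<lambda>n. ereal (w0 + K1 * exp (real n * (L - \<delta> / 2))) \<le> f n) sequentially"
    and f_upper: "eventually (\<lambda>n. f n \<le> ereal (w0 + K2 * exp (real n * (L + \<delta> / 2)))) sequentially"
    using lower[of "\<delta> / 2"] upper[of "\<delta> / 2"] \<open>0 < \<delta>\<close> \<open>\<delta> < d0\<close> by auto
  show "eventually (\<lambda>n. ereal (exp (real n * (L - \<delta>))) \<le> f n - ereal w0 \<and>
      f n - ereal w0 \<le> ereal (exp (real n * (L + \<delta>)))) sequentially"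
    using f_lower f_upper eventually_exp_le_const_mult[OF \<open>0 < K1\<close> \<open>0 < \<delta> / 2\<close>, of "L - \<delta> / 2"]
      eventually_const_mult_exp_le[OF \<open>0 < K2\<close> \<open>0 < \<delta> / 2\<close>, of "L + \<delta> / 2"]
  proof eventually_elim
    case (elim n)
    then show ?case by (cases "f n") (auto simp: add.commute)
  qed
qed

lemma less_exp_of_scaled_eln_less:
  assumes "0 < n" "0 \<le> p" "ereal (1 / real n) * eln p < ereal r"
  shows "p < exp (real n * r)"
proof (cases "p = 0")
  case False
  then have "ln p / real n < r" using assms by (simp add: eln_def)
  then have "ln p < real n * r" using assms(1) by (simp add: divide_less_eq mult.commute)
  then show ?thesis using False assms(2) by (metis exp_less_mono exp_ln less_le)
qed simp

lemma exp_less_of_scaled_eln_greater: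
  assumes "0 < n" "ereal r < ereal (1 / real n) * eln p"
  shows "exp (real n * r) < p"
proof (cases "p \<le> 0")
  case True
  then show ?thesis using assms by (simp add: eln_def)
next
  case False
  then have "r < ln p / real n" using assms by (simp add: eln_def)
  then have "real n * r < ln p" using assms(1) by (simp add: less_divide_eq mult.commute)
  then show ?thesis using False by (metis exp_less_mono exp_ln not_le)
qed

lemma exp_mult_le_iff_le_ln_ratio:
  assumes "0 < n" "0 < p" "0 < q"
  shows "exp (real n * x) * q \<le> p \<longleftrightarrow> x \<le> ln (p / q) / real n"
proof -
  have "exp (real n * x) * q \<le> p \<longleftrightarrow> exp (real n * x) \<le> p / q"
    using assms(3) by (simp add: pos_le_divide_eq)
  also have "\<dots> \<longleftrightarrow> real n * x \<le> ln (p / q)" using assms by (simp add: ln_ge_iff)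
  also have "\<dots> \<longleftrightarrow> x \<le> ln (p / q) / real n" using assms(1) by (simp add: le_divide_eq mult.commute)
  finally show ?thesis .
qed

lemma le_exp_mult_iff_ln_ratio_le:
  assumes "0 < n" "0 < p" "0 < q"
  shows "p \<le> exp (real n * x) * q \<longleftrightarrow> ln (p / q) / real n \<le> x"
proof -
  have "p \<le> exp (real n * x) * q \<longleftrightarrow> p / q \<le> exp (real n * x)"
    using assms(3) by (simp add: pos_divide_le_eq)
  also have "\<dots> \<longleftrightarrow> ln (p / q) \<le> real n * x"
    using assms by (metis divide_pos_pos exp_le_cancel_iff exp_ln)
  also have "\<dots> \<longleftrightarrow> ln (p / q) / real n \<le> x" using assms(1) by (simp add: divide_le_eq mult.commute)
  finally show ?thesis .
qed

lemma emeasure_density_scaled_mono: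
  fixes f h :: "'z \<Rightarrow> real"
  assumes [measurable]: "f \<in> borel_measurable M" "h \<in> borel_measurable M" "E \<in> sets M"
    and "0 \<le> k1" "0 \<le> k2" and le: "AE z in M. z \<in> E \<longrightarrow> k1 * f z \<le> k2 * h z"
  shows "ennreal k1 * emeasure (density M f) E \<le> ennreal k2 * emeasure (density M h) E"
proof -
  have scaled: "ennreal k * emeasure (density M g) E = (\<integral>\<^sup>+z. ennreal (k * g z) * indicator E z \<partial>M)"
    if "0 \<le> k" "g \<in> borel_measurable M" for k and g :: "'z \<Rightarrow> real"
    using that by (simp add: emeasure_density nn_integral_cmult[symmetric] ennreal_mult' mult.assoc)
  have "(\<integral>\<^sup>+z. ennreal (k1 * f z) * indicator E z \<partial>M) \<le> (\<integral>\<^sup>+z. ennreal (k2 * h z) * indicator E z \<partial>M)"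
    using le by (intro nn_integral_mono_AE) (auto elim!: eventually_mono simp: indicator_def ennreal_leI)
  then show ?thesis using scaled assms by simp
qed

lemma measure_le_measure_Int_add_compl:
  assumes "prob_space M" "Q \<in> sets M" "E \<in> sets M"
  shows "measure M Q \<le> measure M (Q \<inter> E) + (1 - measure M E)"
proof -
  interpret prob_space M by fact
  have "measure M Q \<le> measure M ((Q \<inter> E) \<union> (space M - E))"
    using assms(2,3) sets.sets_into_space by (intro finite_measure_mono) auto
  also have "\<dots> \<le> measure M (Q \<inter> E) + measure M (space M - E)"
    using assms(2,3) by (intro measure_subadditive) (auto simp: emeasure_eq_measure)
  finally show ?thesis using prob_compl[OF assms(3)] by simp
qed

lemma card_image_if_eq_2:
  assumes "S \<inter> X \<noteq> {}" "X - S \<noteq> {}" "a \<noteq> b"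
  shows "card ((\<lambda>z. if z \<in> S then a else b) ` X) = 2"
proof -
  obtain z1 z2 where "z1 \<in> S \<inter> X" "z2 \<in> X - S" using assms(1,2) by blast
  then have "(\<lambda>z. if z \<in> S then a else b) ` X = {a, b}"
    using image_eqI[of a "\<lambda>z. if z \<in> S then a else b" z1 X]
      image_eqI[of b "\<lambda>z. if z \<in> S then a else b" z2 X] by auto
  then show ?thesis using assms(3) by simp
qed

lemma integral_if_const:
  fixes C1 C2 :: real
  assumes "prob_space N" "S \<in> sets N"
  shows "integrable N (\<lambda>z. if z \<in> S then C1 else C2)"
    and "(\<integral>z. (if z \<in> S then C1 else C2) \<partial>N) = C2 - (C2 - C1) * measure N S"
proof -
  interpret prob_space N by fact
  have eq: "(\<lambda>z. if z \<in> S then C1 else C2) = (\<lambda>z. C2 - (C2 - C1) * indicator S z)"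
    by (auto simp: indicator_def fun_eq_iff)
  have "integrable N (indicator S :: _ \<Rightarrow> real)"
    using assms(2) by (intro integrable_real_indicator) (auto simp: emeasure_eq_measure)
  then show "integrable N (\<lambda>z. if z \<in> S then C1 else C2)"
    and "(\<integral>z. (if z \<in> S then C1 else C2) \<partial>N) = C2 - (C2 - C1) * measure N S"
    unfolding eq using assms(2) prob_space by (auto simp: Int_absorb2 sets.sets_into_space)
qed

lemma exists_binary_utility_level:
  fixes p cs ul :: real
  assumes "0 \<le> p" "p < 1 / 2" "ul < cs"
  shows "\<exists>y. y - (y - ul) * p = cs \<and> cs \<le> y \<and> y - cs \<le> 2 * p * (cs - ul)"
proof (intro exI conjI)
  define y where "y = (cs - ul * p) / (1 - p)"
  have gap: "y - cs = p * (cs - ul) / (1 - p)" using assms(2) by (simp add: y_def field_simps)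
  have "y * (1 - p) = cs - ul * p" using assms(2) by (simp add: y_def)
  then show "y - (y - ul) * p = cs" by (simp add: algebra_simps)
  have "0 \<le> p * (cs - ul) / (1 - p)" using assms by simp
  then show "cs \<le> y" using gap by simp
  have "p * (cs - ul) / (1 - p) \<le> p * (cs - ul) / (1 / 2)"
    using assms by (intro divide_left_mono) auto
  then show "y - cs \<le> 2 * p * (cs - ul)" using gap by simp
qed

section \<open>Concave utility\<close>

lemma mvt_within_atLeast:
  fixes f f' :: "real \<Rightarrow> real"
  assumes "l \<le> x" "x < y"
    and deriv: "\<And>w. l \<le> w \<Longrightarrow> (f has_real_derivative f' w) (at w within {l..})"
  shows "\<exists>\<xi>. x < \<xi> \<and> \<xi> < y \<and> f y - f x = f' \<xi> * (y - x)"
proof -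
  have "(f has_derivative (*) (f' w)) (at w within {x..y})" if "x \<le> w" "w \<le> y" for w
  proof -
    have "(f has_real_derivative f' w) (at w within {x..y})"
      using deriv[of w] that assms(1) by (auto intro: DERIV_subset)
    then show ?thesis by (simp add: has_field_derivative_def)
  qed
  from mvt_simple[OF assms(2) this] show ?thesis by (auto simp: mult.commute)
qed

locale concave_utility =
  fixes wlow :: real and u u' u'' :: "real \<Rightarrow> real"
  assumes u_deriv: "\<And>w. wlow \<le> w \<Longrightarrow> (u has_real_derivative u' w) (at w within {wlow..})"
    and u'_deriv: "\<And>w. wlow \<le> w \<Longrightarrow> (u' has_real_derivative u'' w) (at w within {wlow..})"
    and u'_pos: "\<And>w. wlow \<le> w \<Longrightarrow> 0 < u' w"
    and u''_neg: "\<And>w. wlow \<le> w \<Longrightarrow> u'' w < 0"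
begin

lemma u'_strict_antimono:
  assumes "wlow \<le> x" "x < y"
  shows "u' y < u' x"
proof -
  obtain \<xi> where "x < \<xi>" "u' y - u' x = u'' \<xi> * (y - x)"
    using mvt_within_atLeast[OF assms u'_deriv] by blast
  moreover have "u'' \<xi> * (y - x) < 0"
    using u''_neg assms \<open>x < \<xi>\<close> by (intro mult_neg_pos) auto
  ultimately show ?thesis by linarith
qed

lemma u'_antimono: "wlow \<le> x \<Longrightarrow> x \<le> y \<Longrightarrow> u' y \<le> u' x"
  using u'_strict_antimono by (cases "x = y") (auto intro: less_imp_le)

lemma secant_bounds:
  assumes "wlow \<le> x" "x < y"
  shows "u' y * (y - x) < u y - u x" "u y - u x < u' x * (y - x)"
proof -
  obtain \<xi> where \<xi>: "x < \<xi>" "\<xi> < y" "u y - u x = u' \<xi> * (y - x)"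
    using mvt_within_atLeast[OF assms u_deriv] by blast
  have "u' y < u' \<xi>" "u' \<xi> < u' x"
    using u'_strict_antimono assms(1) \<xi>(1,2) by auto
  then show "u' y * (y - x) < u y - u x" "u y - u x < u' x * (y - x)"
    using \<xi>(3) assms(2) by auto
qed

lemma deriv_mult_le_secant: "wlow \<le> x \<Longrightarrow> x \<le> y \<Longrightarrow> u' y * (y - x) \<le> u y - u x"
  using secant_bounds(1) by (cases "x = y") (auto intro: less_imp_le)

lemma u_strict_mono: "wlow \<le> x \<Longrightarrow> x < y \<Longrightarrow> u x < u y"
  using secant_bounds(1) u'_pos[of y] by (smt (verit) mult_pos_pos)

lemma u_mono: "wlow \<le> x \<Longrightarrow> x \<le> y \<Longrightarrow> u x \<le> u y"
  using u_strict_mono by (cases "x = y") (auto intro: less_imp_le)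

lemma u_le_iff: "wlow \<le> x \<Longrightarrow> wlow \<le> y \<Longrightarrow> u x \<le> u y \<longleftrightarrow> x \<le> y"
  using u_strict_mono by (meson linorder_not_le u_mono)

lemma u_le_tangent:
  assumes "wlow \<le> x" "wlow \<le> y"
  shows "u y \<le> u x + u' x * (y - x)"
proof (cases x y rule: linorder_cases)
  case less
  then show ?thesis using secant_bounds(2)[OF assms(1) less] by simp
next
  case greater
  then show ?thesis using secant_bounds(1)[OF assms(2) greater] by (simp add: algebra_simps)
qed simp

lemma continuous_on_u: "continuous_on {wlow..} u"
  using u_deriv by (metis DERIV_continuous atLeast_iff continuous_on_eq_continuous_within)

lemma u_plus_kink_le_tangent:
  assumes "wlow \<le> w1" "w1 \<le> wt" "wlow \<le> w"
  shows "u w + (if w \<le> w1 then u wt - u' wt * (wt - w1) - u w1 else 0) \<le> u wt + u' wt * (w - wt)"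
proof (cases "w \<le> w1")
  case True
  have "u w \<le> u w1 + u' w1 * (w - w1)" using u_le_tangent assms by blast
  moreover have "u' w1 * (w - w1) \<le> u' wt * (w - w1)"
    using u'_antimono[OF assms(1,2)] True by (intro mult_right_mono_neg) auto
  ultimately show ?thesis using True by (simp add: algebra_simps)
next
  case False
  then show ?thesis using u_le_tangent[of wt w] assms by simp
qed

lemma deriv_mult_wage_gap_le:
  assumes "wlow \<le> wt" "wt \<le> x" "x \<le> xmax"
  shows "u' xmax * (x - wt) \<le> u x - u wt"
proof (cases "wt = x")
  case False
  then have "u' x * (x - wt) < u x - u wt" using secant_bounds(1) assms by simp
  moreover have "u' xmax * (x - wt) \<le> u' x * (x - wt)"
    using u'_antimono assms by (intro mult_right_mono) auto
  ultimately show ?thesis by simp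
qed simp

end

section \<open>Large deviations of the score\<close>

lemma ereal_bounded_away_from_zero_on_closed:
  fixes I :: "'a::heine_borel \<Rightarrow> ereal"
  assumes level_compact: "\<And>t. compact {l. I l \<le> ereal t}"
    and "closed F" and pos: "\<And>l. l \<in> F \<Longrightarrow> 0 < I l"
  shows "\<exists>t>0. \<forall>l\<in>F. ereal t \<le> I l"
proof (rule ccontr)
  assume none: "\<not> ?thesis"
  define K where "K m = F \<inter> {l. I l \<le> ereal (inverse (real (Suc m)))}" for m
  have "\<Inter>(range K) \<noteq> {}"
  proof (rule compact_nest)
    show "compact (K m)" for m
      unfolding K_def using \<open>closed F\<close> level_compact by blast
    show "K m \<noteq> {}" for m
      using none[unfolded not_ex] by (fastforce simp: K_def not_le dest: spec[of _ "inverse (real (Suc m))"])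
    show "K n \<subseteq> K m" if "m \<le> n" for m n
      using that by (auto simp: K_def intro: order.trans)
  qed
  then obtain l where "l \<in> F" and small: "\<And>m. I l \<le> ereal (inverse (real (Suc m)))"
    by (auto simp: K_def)
  have "I l \<le> ereal 0"
    by (rule LIMSEQ_le_const[OF tendsto_ereal[OF LIMSEQ_inverse_real_of_nat]]) (use small in blast)
  then show False using pos[OF \<open>l \<in> F\<close>] by (simp add: zero_ereal_def)
qed

locale monitoring =
  fixes A :: "'a set" and astar :: 'a
    and nu :: "'z measure" and g :: "nat \<Rightarrow> 'a \<Rightarrow> 'z \<Rightarrow> real"
    and I :: "'a \<Rightarrow> 'a \<Rightarrow> real \<Rightarrow> ereal" and Lhat :: "'a \<Rightarrow> 'a \<Rightarrow> real"
  assumes finA: "finite A" and astarA: "astar \<in> A"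
    and g_meas: "\<And>n a. a \<in> A \<Longrightarrow> g n a \<in> borel_measurable nu"
    and g_nonneg: "\<And>n a z. a \<in> A \<Longrightarrow> z \<in> space nu \<Longrightarrow> 0 \<le> g n a z"
    and g_prob: "\<And>n a. a \<in> A \<Longrightarrow> prob_space (mon nu g n a)"
    and score_wd: "\<And>n a a'. a \<in> A \<Longrightarrow> a' \<in> A \<Longrightarrow> a' \<noteq> astar \<Longrightarrow>
        AE z in mon nu g n a. 0 < g n astar z \<and> 0 < g n a' z"
    and LD: "\<And>a a' B. a \<in> A \<Longrightarrow> a' \<in> A \<Longrightarrow> a' \<noteq> astar \<Longrightarrow> B \<in> sets borel \<Longrightarrow>
        - (INF l \<in> interior B. I a a' l) \<le> liminf (ld_rate nu g astar a a' B) \<and>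
        limsup (ld_rate nu g astar a a' B) \<le> - (INF l \<in> closure B. I a a' l)"
    and I_nonneg: "\<And>a a' l. a \<in> A \<Longrightarrow> a' \<in> A \<Longrightarrow> a' \<noteq> astar \<Longrightarrow> 0 \<le> I a a' l"
    and Lhat_unique: "\<And>a a' l. a \<in> A \<Longrightarrow> a' \<in> A \<Longrightarrow> a' \<noteq> astar \<Longrightarrow>
        (\<forall>l'. I a a' l \<le> I a a' l') \<Longrightarrow> l = Lhat a a'"
    and ident: "\<And>a b a'. a \<in> A \<Longrightarrow> b \<in> A \<Longrightarrow> a' \<in> A \<Longrightarrow> a' \<noteq> astar \<Longrightarrow>
        a \<noteq> b \<Longrightarrow> Lhat a a' \<noteq> Lhat b a'"
    and level_compact: "\<And>a a' t. a \<in> A \<Longrightarrow> a' \<in> A \<Longrightarrow> a' \<noteq> astar \<Longrightarrow>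
        compact {l. I a a' l \<le> ereal t}"
    and cont1: "\<And>a'. a' \<in> A \<Longrightarrow> a' \<noteq> astar \<Longrightarrow> isCont (I astar a') (Lhat a' a')"
begin

abbreviation "M n a \<equiv> mon nu g n a"

definition score_event :: "nat \<Rightarrow> 'a \<Rightarrow> real set \<Rightarrow> 'z set" where
  "score_event n a B = {z \<in> space nu. score g astar n a z \<in> B}"

lemma space_mon [simp]: "space (M n a) = space nu"
  and sets_mon [simp]: "sets (M n a) = sets nu"
  by (simp_all add: mon_def)

lemma measure_mon_le_1: "a \<in> A \<Longrightarrow> measure (M n a) E \<le> 1"
  using g_prob prob_space.prob_le_1 by blast

lemma emeasure_mon_eq_measure: "a \<in> A \<Longrightarrow> emeasure (M n a) E = ennreal (measure (M n a) E)"
  using g_prob prob_space.finite_measure finite_measure.emeasure_eq_measure by blast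

lemma score_event_sets: "a \<in> A \<Longrightarrow> B \<in> sets borel \<Longrightarrow> score_event n a B \<in> sets nu"
proof -
  assume "a \<in> A" "B \<in> sets borel"
  have "score g astar n a \<in> borel_measurable nu"
    unfolding score_def using g_meas[OF astarA] g_meas[OF \<open>a \<in> A\<close>] by measurable
  from measurable_sets[OF this \<open>B \<in> sets borel\<close>] show ?thesis
    by (simp add: score_event_def vimage_def Int_def conj_commute)
qed

lemma ld_rate_eq: "ld_rate nu g astar a a' B n = ereal (1 / real n) * eln (measure (M n a) (score_event n a' B))"
  by (simp add: ld_rate_def score_event_def)

lemma eventually_measure_less_exp:
  assumes "a \<in> A" "a' \<in> A" "a' \<noteq> astar" "B \<in> sets borel"
    and "\<And>l. l \<in> closure B \<Longrightarrow> ereal t \<le> I a a' l" and "- t < r"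
  shows "eventually (\<lambda>n. measure (M n a) (score_event n a' B) < exp (real n * r)) sequentially"
proof -
  have "ereal t \<le> (INF l \<in> closure B. I a a' l)" using assms(5) by (auto intro: INF_greatest)
  then have "- (INF l \<in> closure B. I a a' l) \<le> - ereal t" by (simp only: ereal_minus_le_minus)
  also have "\<dots> < ereal r" using assms(6) by simp
  finally have "- (INF l \<in> closure B. I a a' l) < ereal r" .
  then have "limsup (ld_rate nu g astar a a' B) < ereal r"
    using LD[OF assms(1-4)] by (meson le_less_trans)
  then have "eventually (\<lambda>n. ld_rate nu g astar a a' B n < ereal r) sequentially" by (rule Limsup_lessD)
  with eventually_gt_at_top[of 0] show ?thesis
    by eventually_elim (auto intro: less_exp_of_scaled_eln_less simp: ld_rate_eq)
qed

lemma eventually_exp_less_measure: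
  assumes "a \<in> A" "a' \<in> A" "a' \<noteq> astar" "B \<in> sets borel"
    and "l \<in> interior B" "I a a' l < ereal t" and "r < - t"
  shows "eventually (\<lambda>n. exp (real n * r) < measure (M n a) (score_event n a' B)) sequentially"
proof -
  have "(INF l \<in> interior B. I a a' l) < ereal t" using assms(5,6) by (meson INF_lower le_less_trans)
  then have "- ereal t < - (INF l \<in> interior B. I a a' l)" by (simp only: ereal_minus_less_minus)
  moreover have "ereal r < - ereal t" using assms(7) by simp
  ultimately have "ereal r < - (INF l \<in> interior B. I a a' l)" by (rule order.strict_trans[rotated])
  then have "ereal r < liminf (ld_rate nu g astar a a' B)"
    using LD[OF assms(1-4)] by (meson less_le_trans)
  then have "eventually (\<lambda>n. ereal r < ld_rate nu g astar a a' B n) sequentially" by (rule less_LiminfD)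
  with eventually_gt_at_top[of 0] show ?thesis
    by eventually_elim (auto intro: exp_less_of_scaled_eln_greater simp: ld_rate_eq)
qed

lemma rate_bounded_away_off_minimizer:
  assumes "a \<in> A" "a' \<in> A" "a' \<noteq> astar" "closed F" "Lhat a a' \<notin> F"
  shows "\<exists>t>0. \<forall>l\<in>F. ereal t \<le> I a a' l"
proof (rule ereal_bounded_away_from_zero_on_closed[OF level_compact[OF assms(1-3)] assms(4)])
  fix l assume "l \<in> F"
  show "0 < I a a' l"
  proof (rule ccontr)
    assume "\<not> 0 < I a a' l"
    then have "\<forall>l'. I a a' l \<le> I a a' l'" using I_nonneg[OF assms(1-3)] by (meson not_less order_trans)
    then show False using Lhat_unique[OF assms(1-3)] assms(5) \<open>l \<in> F\<close> by blast
  qed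
qed

lemma eventually_score_near_minimizer:
  assumes "a \<in> A" "a \<noteq> astar" "0 < \<delta>" "0 < \<epsilon>"
  shows "eventually (\<lambda>n. 1 - \<epsilon> < measure (M n a) (score_event n a {Lhat a a - \<delta> <..< Lhat a a + \<delta>}))
    sequentially"
proof -
  let ?U = "{Lhat a a - \<delta> <..< Lhat a a + \<delta>}"
  obtain t where "t > 0" and t: "\<And>l. l \<in> - ?U \<Longrightarrow> ereal t \<le> I a a l"
    using rate_bounded_away_off_minimizer[OF assms(1,1,2), of "- ?U"] assms(3) by (auto simp: closed_Compl)
  have "eventually (\<lambda>n. measure (M n a) (score_event n a (- ?U)) < exp (real n * (- t / 2))) sequentially"
    using t \<open>t > 0\<close> by (intro eventually_measure_less_exp[OF assms(1,1,2)]) (auto simp: closed_Compl)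
  moreover have "eventually (\<lambda>n. exp (real n * (- t / 2)) < \<epsilon>) sequentially"
    using \<open>t > 0\<close> assms(4) by (intro eventually_exp_less) auto
  ultimately show ?thesis
  proof eventually_elim
    case (elim n)
    interpret prob_space "M n a" using g_prob assms(1) .
    have "score_event n a (- ?U) = space (M n a) - score_event n a ?U" by (auto simp: score_event_def)
    then show ?case using elim prob_compl[of "score_event n a ?U"] score_event_sets[OF assms(1)] by simp
  qed
qed

lemma exp_mult_measure_le_of_score_ge:
  assumes "a \<in> A" "a \<noteq> astar" "0 < n" "E \<in> sets nu" "\<And>z. z \<in> E \<Longrightarrow> x \<le> score g astar n a z"
  shows "exp (real n * x) * measure (M n a) E \<le> measure (M n astar) E"
proof -
  have "AE z in density nu (\<lambda>z. ennreal (g n a z)). 0 < g n astar z"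
    using score_wd[OF assms(1,1,2), of n] unfolding mon_def by (auto elim: eventually_mono)
  then have "AE z in nu. 0 < g n a z \<longrightarrow> 0 < g n astar z"
    using g_meas[OF assms(1)] by (simp add: AE_density)
  then have "AE z in nu. z \<in> E \<longrightarrow> exp (real n * x) * g n a z \<le> 1 * g n astar z"
    using AE_space
  proof eventually_elim
    case (elim z)
    show ?case
    proof (cases "0 < g n a z")
      case True
      then show ?thesis using elim assms(3,5) exp_mult_le_iff_le_ln_ratio by (simp add: score_def)
    next
      case False
      then have "g n a z = 0" using g_nonneg[of a z n] assms(1) elim(2) by simp
      then show ?thesis using g_nonneg[of astar z n] astarA elim(2) by simp
    qed
  qed
  then have "ennreal (exp (real n * x)) * emeasure (M n a) E \<le> ennreal 1 * emeasure (M n astar) E"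
    unfolding mon_def using g_meas assms(1,4) astarA by (intro emeasure_density_scaled_mono) auto
  then show ?thesis
    using assms(1) astarA by (simp add: emeasure_mon_eq_measure ennreal_mult[symmetric])
qed

lemma measure_le_exp_mult_of_score_le:
  assumes "a \<in> A" "a \<noteq> astar" "0 < n" "E \<in> sets nu" "\<And>z. z \<in> E \<Longrightarrow> score g astar n a z \<le> x"
  shows "measure (M n astar) E \<le> exp (real n * x) * measure (M n a) E"
proof -
  have "AE z in density nu (\<lambda>z. ennreal (g n astar z)). 0 < g n a z"
    using score_wd[OF astarA assms(1,2), of n] unfolding mon_def by (auto elim: eventually_mono)
  then have "AE z in nu. 0 < g n astar z \<longrightarrow> 0 < g n a z"
    using g_meas[OF astarA] by (simp add: AE_density)
  then have "AE z in nu. z \<in> E \<longrightarrow> 1 * g n astar z \<le> exp (real n * x) * g n a z"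
    using AE_space
  proof eventually_elim
    case (elim z)
    show ?case
    proof (cases "0 < g n astar z")
      case True
      then show ?thesis using elim assms(3,5) le_exp_mult_iff_ln_ratio_le by (simp add: score_def)
    next
      case False
      then have "g n astar z = 0" using g_nonneg[of astar z n] astarA elim(2) by simp
      then show ?thesis using g_nonneg[of a z n] assms(1) elim(2) by simp
    qed
  qed
  then have "ennreal 1 * emeasure (M n astar) E \<le> ennreal (exp (real n * x)) * emeasure (M n a) E"
    unfolding mon_def using g_meas assms(1,4) astarA by (intro emeasure_density_scaled_mono) auto
  then show ?thesis
    using assms(1) astarA by (simp add: emeasure_mon_eq_measure ennreal_mult[symmetric])
qed

lemma measure_near_own_minimizer_le_exp:
  assumes "a \<in> A" "a \<noteq> astar" "0 < n"
  shows "measure (M n astar) (score_event n a {Lhat a a - \<delta> <..< Lhat a a + \<delta>})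
    \<le> exp (real n * (Lhat a a + \<delta>))"
proof -
  let ?E = "score_event n a {Lhat a a - \<delta> <..< Lhat a a + \<delta>}"
  have "?E \<in> sets nu" by (rule score_event_sets[OF assms(1)]) simp
  then have "measure (M n astar) ?E \<le> exp (real n * (Lhat a a + \<delta>)) * measure (M n a) ?E"
    by (intro measure_le_exp_mult_of_score_le[OF assms]) (auto simp: score_event_def)
  also have "\<dots> \<le> exp (real n * (Lhat a a + \<delta>))" using measure_mon_le_1[OF assms(1)] by simp
  finally show ?thesis .
qed

lemma eventually_exp_le_measure_near_own_minimizer:
  assumes "a \<in> A" "a \<noteq> astar" "0 < \<delta>"
  shows "eventually (\<lambda>n. exp (real n * (Lhat a a - \<delta>)) / 2
    \<le> measure (M n astar) (score_event n a {Lhat a a - \<delta> <..< Lhat a a + \<delta>})) sequentially"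
proof -
  let ?E = "\<lambda>n. score_event n a {Lhat a a - \<delta> <..< Lhat a a + \<delta>}"
  have "eventually (\<lambda>n. 1 / 2 < measure (M n a) (?E n)) sequentially"
    using eventually_score_near_minimizer[OF assms, of "1/2"] by simp
  with eventually_gt_at_top[of 0] show ?thesis
  proof eventually_elim
    case (elim n)
    have "?E n \<in> sets nu" by (rule score_event_sets[OF assms(1)]) simp
    have "exp (real n * (Lhat a a - \<delta>)) / 2 \<le> exp (real n * (Lhat a a - \<delta>)) * measure (M n a) (?E n)"
      using elim(2) by simp
    also have "\<dots> \<le> measure (M n astar) (?E n)"
      using \<open>?E n \<in> sets nu\<close>
      by (intro exp_mult_measure_le_of_score_ge[OF assms(1,2) elim(1)]) (auto simp: score_event_def)
    finally show ?case .
  qed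
qed

lemma rate_at_own_minimizer_le:
  assumes "a \<in> A" "a \<noteq> astar"
  shows "I astar a (Lhat a a) \<le> ereal (- Lhat a a)"
proof (rule ccontr)
  define la where "la = Lhat a a"
  assume "\<not> ?thesis"
  then have "ereal (- la) < I astar a la" by (simp add: la_def not_le)
  then obtain r where "ereal (- la) < ereal r" "ereal r < I astar a la"
    using ereal_dense2 by blast
  then have r: "- la < r" "ereal r < I astar a la" by simp_all
  have "((I astar a) \<longlongrightarrow> I astar a la) (nhds la)"
    using cont1[OF assms] by (simp add: la_def isCont_def tendsto_at_iff_tendsto_nhds)
  from order_tendstoD(1)[OF this r(2)] obtain d where "0 < d"
    and near: "\<And>l. dist l la < d \<Longrightarrow> ereal r < I astar a l"
    unfolding eventually_nhds_metric by blast
  define \<delta> where "\<delta> = min (d / 2) ((r + la) / 4)"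
  have "\<delta> \<le> d / 2" "\<delta> \<le> (r + la) / 4" "0 < \<delta>"
    using \<open>0 < d\<close> r(1) unfolding \<delta>_def by (simp_all only: min.cobounded1 min.cobounded2) simp
  then have \<delta>: "0 < \<delta>" "\<delta> < d" "2 * \<delta> < r + la" by argo+
  let ?C = "{la - \<delta> .. la + \<delta>}"
  have C_bound: "ereal r \<le> I astar a l" if "l \<in> closure ?C" for l
  proof -
    have "dist l la < d" using that \<delta>(2) by (auto simp: dist_real_def abs_less_iff)
    then show ?thesis using near by (auto intro: less_imp_le)
  qed
  have upper: "eventually (\<lambda>n. measure (M n astar) (score_event n a ?C) < exp (real n * (\<delta> - r)))
      sequentially"
    by (rule eventually_measure_less_exp[OF astarA assms _ C_bound]) (use \<delta>(1) in auto)
  have "eventually (\<lambda>n. (1 / 2) * exp (real n * (la - \<delta>)) \<le> exp (real n * (\<delta> - r))) sequentially"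
    using eventually_exp_le_measure_near_own_minimizer[OF assms \<delta>(1)] upper
  proof eventually_elim
    case (elim n)
    have "score_event n a ?C \<in> sets nu" by (rule score_event_sets[OF assms(1)]) simp
    then have "measure (M n astar) (score_event n a {la - \<delta> <..< la + \<delta>})
        \<le> measure (M n astar) (score_event n a ?C)"
      using g_prob[OF astarA]
      by (intro finite_measure.finite_measure_mono prob_space.finite_measure) (auto simp: score_event_def)
    then show ?case using elim by (simp add: la_def)
  qed
  then have "la - \<delta> \<le> \<delta> - r" by (rule exponent_le_of_eventually_le[rotated]) simp
  then show False using \<delta>(3) by simp
qed

lemma rate_at_own_minimizer_ge:
  assumes "a \<in> A" "a \<noteq> astar"
  shows "ereal (- Lhat a a) \<le> I astar a (Lhat a a)"
proof (rule ccontr)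
  define la where "la = Lhat a a"
  assume "\<not> ?thesis"
  then have "I astar a la < ereal (- la)" by (simp add: la_def not_le)
  then obtain t where "I astar a la < ereal t" "ereal t < ereal (- la)"
    using ereal_dense2 by blast
  then have t: "I astar a la < ereal t" "t < - la" by simp_all
  define \<delta> where "\<delta> = (- la - t) / 2"
  have "0 < \<delta>" "- t = la + 2 * \<delta>" using t(2) unfolding \<delta>_def by argo+
  let ?U = "{la - \<delta> <..< la + \<delta>}"
  have la_int: "la \<in> interior ?U" using \<open>0 < \<delta>\<close> by (simp add: interior_open)
  have "eventually (\<lambda>n. exp (real n * (la + 3 * \<delta> / 2)) < measure (M n astar) (score_event n a ?U))
      sequentially"
    by (rule eventually_exp_less_measure[OF astarA assms _ la_int t(1)]) (use \<open>0 < \<delta>\<close> \<open>- t = _\<close> in auto)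
  then have "eventually (\<lambda>n. 1 * exp (real n * (la + 3 * \<delta> / 2)) \<le> exp (real n * (la + \<delta>))) sequentially"
    using eventually_gt_at_top[of 0]
  proof eventually_elim
    case (elim n)
    then show ?case using measure_near_own_minimizer_le_exp[OF assms elim(2), of \<delta>]
      unfolding la_def mult_1 by linarith
  qed
  then have "la + 3 * \<delta> / 2 \<le> la + \<delta>" by (rule exponent_le_of_eventually_le[rotated]) simp
  then show False using \<open>0 < \<delta>\<close> by simp
qed

lemma rate_at_own_minimizer:
  "a \<in> A \<Longrightarrow> a \<noteq> astar \<Longrightarrow> I astar a (Lhat a a) = ereal (- Lhat a a)"
  using rate_at_own_minimizer_le rate_at_own_minimizer_ge by (blast intro: antisym)

lemma own_minimizer_neg:
  assumes "a \<in> A" "a \<noteq> astar"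
  shows "Lhat a a < 0"
proof -
  have "I astar a (Lhat a a) \<noteq> 0"
  proof
    assume "I astar a (Lhat a a) = 0"
    then have "Lhat a a = Lhat astar a"
      using I_nonneg[OF astarA assms] by (intro Lhat_unique[OF astarA assms]) simp
    then show False using ident[OF assms(1) astarA assms(1,2,2)] by simp
  qed
  then show ?thesis
    using I_nonneg[OF astarA assms, of "Lhat a a"] rate_at_own_minimizer[OF assms] by simp
qed

lemma eventually_measure_transfer_to_astar:
  assumes "a \<in> A" "a \<noteq> astar" "0 < \<delta>" "0 < \<eta>"
  shows "eventually (\<lambda>n. \<forall>Q \<in> sets nu. \<eta> \<le> measure (M n a) Q \<longrightarrow>
    exp (real n * (Lhat a a - \<delta>)) * (\<eta> / 2) \<le> measure (M n astar) Q) sequentially"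
proof -
  let ?E = "\<lambda>n. score_event n a {Lhat a a - \<delta> <..< Lhat a a + \<delta>}"
  have "eventually (\<lambda>n. 1 - \<eta> / 2 < measure (M n a) (?E n)) sequentially"
    using eventually_score_near_minimizer[OF assms(1-3)] assms(4) by simp
  then show ?thesis using eventually_gt_at_top[of 0]
  proof eventually_elim
    case (elim n)
    have "?E n \<in> sets nu" by (rule score_event_sets[OF assms(1)]) simp
    show ?case
    proof (intro ballI impI)
      fix Q assume "Q \<in> sets nu" "\<eta> \<le> measure (M n a) Q"
      then have "\<eta> / 2 \<le> measure (M n a) (Q \<inter> ?E n)"
        using measure_le_measure_Int_add_compl[OF g_prob[of a n], of Q "?E n"] assms(1) \<open>?E n \<in> sets nu\<close> elim(1)
        by simp
      then have "exp (real n * (Lhat a a - \<delta>)) * (\<eta> / 2)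
          \<le> exp (real n * (Lhat a a - \<delta>)) * measure (M n a) (Q \<inter> ?E n)"
        by simp
      also have "\<dots> \<le> measure (M n astar) (Q \<inter> ?E n)"
        using \<open>Q \<in> sets nu\<close> \<open>?E n \<in> sets nu\<close>
        by (intro exp_mult_measure_le_of_score_ge[OF assms(1,2) elim(2)]) (auto simp: score_event_def)
      also have "\<dots> \<le> measure (M n astar) Q"
        using \<open>Q \<in> sets nu\<close> \<open>?E n \<in> sets nu\<close> g_prob[OF astarA]
        by (intro finite_measure.finite_measure_mono prob_space.finite_measure) auto
      finally show "exp (real n * (Lhat a a - \<delta>)) * (\<eta> / 2) \<le> measure (M n astar) Q" .
    qed
  qed
qed

end

section \<open>The agency problem\<close>

locale agency = monitoring A astar nu g I Lhat + concave_utility wlow u u' u''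
  for A :: "'a set" and astar :: 'a and nu :: "'z measure" and g :: "nat \<Rightarrow> 'a \<Rightarrow> 'z \<Rightarrow> real"
    and I :: "'a \<Rightarrow> 'a \<Rightarrow> real \<Rightarrow> ereal" and Lhat :: "'a \<Rightarrow> 'a \<Rightarrow> real"
    and wlow :: real and u u' u'' :: "real \<Rightarrow> real" +
  fixes c :: "'a \<Rightarrow> real"
  assumes c_range: "c ` A \<subseteq> interior (u ` {wlow..})"
    and c_some: "\<exists>a\<in>A. c a < c astar"
    and c_distinct: "\<And>a. a \<in> A \<Longrightarrow> a \<noteq> astar \<Longrightarrow> c a \<noteq> c astar"
begin

abbreviation "feasible n w \<equiv> admissible nu g A astar wlow u c n w"

definition "A_minus = {a \<in> A. c a < c astar}"

definition "w_fb = C_FB wlow u c astar"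

lemma A_minus_D: "a \<in> A_minus \<Longrightarrow> a \<in> A \<and> a \<noteq> astar \<and> c a < c astar"
  by (auto simp: A_minus_def)

lemma finite_A_minus: "finite A_minus"
  using finA by (simp add: A_minus_def)

lemma A_minus_nonempty: "A_minus \<noteq> {}"
  using c_some by (auto simp: A_minus_def)

lemma u_wlow_less_c: "a \<in> A \<Longrightarrow> u wlow < c a"
proof -
  assume "a \<in> A"
  then obtain e where "e > 0" "ball (c a) e \<subseteq> u ` {wlow..}" using c_range mem_interior by blast
  then have "c a - e / 2 \<in> u ` {wlow..}" by (auto simp: dist_real_def)
  then obtain w where "wlow \<le> w" "c a - e / 2 = u w" by auto
  then show ?thesis using u_mono[of wlow w] \<open>e > 0\<close> by linarith
qed

lemma w_fb: "wlow < w_fb" "u w_fb = c astar"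
proof -
  have range: "c astar \<in> u ` {wlow..}" using c_range astarA interior_subset by blast
  have "wlow \<le> w_fb" "u w_fb = c astar"
    unfolding w_fb_def C_FB_def using inv_into_into[OF range] f_inv_into_f[OF range] by auto
  then show "wlow < w_fb" "u w_fb = c astar" using u_wlow_less_c[OF astarA] by (auto simp: le_less)
qed

definition "Lmax = Max ((\<lambda>a. Lhat a a) ` A_minus)"

lemma Lmax_ge: "a \<in> A_minus \<Longrightarrow> Lhat a a \<le> Lmax"
  unfolding Lmax_def by (rule Max_ge) (use finite_A_minus in auto)

lemma Lmax_attained: "\<exists>a\<in>A_minus. Lhat a a = Lmax"
proof -
  have "Lmax \<in> (\<lambda>a. Lhat a a) ` A_minus"
    unfolding Lmax_def using finite_A_minus A_minus_nonempty by (intro Max_in) auto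
  then show ?thesis by (auto simp: image_iff)
qed

lemma Lmax_neg: "Lmax < 0"
proof -
  obtain a where "a \<in> A_minus" "Lhat a a = Lmax" using Lmax_attained by blast
  moreover have "Lhat a a < 0" using A_minus_D[OF \<open>a \<in> A_minus\<close>] own_minimizer_neg by simp
  ultimately show ?thesis by simp
qed

lemma rate_Min_eq: "Min ((\<lambda>a. I astar a (Lhat a a)) ` {a \<in> A. c a < c astar}) = ereal (- Lmax)"
proof -
  have "(\<lambda>a. I astar a (Lhat a a)) ` {a \<in> A. c a < c astar} = (\<lambda>a. ereal (- Lhat a a)) ` A_minus"
    unfolding A_minus_def[symmetric] using A_minus_D rate_at_own_minimizer by (intro image_cong) auto
  moreover have "Min ((\<lambda>a. ereal (- Lhat a a)) ` A_minus) = ereal (- Lmax)"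
  proof (rule Min_eqI)
    show "finite ((\<lambda>a. ereal (- Lhat a a)) ` A_minus)" using finite_A_minus by simp
    show "ereal (- Lmax) \<le> y" if "y \<in> (\<lambda>a. ereal (- Lhat a a)) ` A_minus" for y
      using that Lmax_ge by auto
    show "ereal (- Lmax) \<in> (\<lambda>a. ereal (- Lhat a a)) ` A_minus"
      using Lmax_attained by force
  qed
  ultimately show ?thesis by simp
qed

section \<open>Lower bound on the excess cost\<close>

lemma expected_utility_plus_kink_le:
  assumes "feasible n w" "wlow \<le> w1" "w1 \<le> w_fb"
  defines "Q \<equiv> {z \<in> space nu. w z \<le> w1}"
  shows "(\<integral>z. u (w z) \<partial>M n astar) + (c astar - u' w_fb * (w_fb - w1) - u w1) * measure (M n astar) Q
    \<le> c astar + u' w_fb * ((\<integral>z. w z \<partial>M n astar) - w_fb)"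
proof -
  interpret prob_space "M n astar" using g_prob[OF astarA] .
  define \<beta> where "\<beta> = c astar - u' w_fb * (w_fb - w1) - u w1"
  have [measurable]: "w \<in> borel_measurable nu" and w_ge: "\<And>z. z \<in> space nu \<Longrightarrow> wlow \<le> w z"
    and int_w: "integrable (M n astar) w" and int_uw: "integrable (M n astar) (\<lambda>z. u (w z))"
    using assms(1) astarA unfolding admissible_def by auto
  have "Q \<in> sets nu" unfolding Q_def by measurable
  then have int_Q: "integrable (M n astar) (indicator Q :: 'z \<Rightarrow> real)"
    by (intro integrable_real_indicator) (auto simp: emeasure_eq_measure)
  have "u (w z) + \<beta> * indicator Q z \<le> c astar + u' w_fb * (w z - w_fb)" if "z \<in> space nu" for z
    using u_plus_kink_le_tangent[OF assms(2,3) w_ge[OF that]] w_fb(2) that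
    by (simp add: Q_def \<beta>_def indicator_def split: if_splits)
  then have "(\<integral>z. u (w z) + \<beta> * indicator Q z \<partial>M n astar) \<le> (\<integral>z. c astar + u' w_fb * (w z - w_fb) \<partial>M n astar)"
    using int_uw int_Q int_w by (intro integral_mono) auto
  then show ?thesis
    using int_uw int_Q int_w \<open>Q \<in> sets nu\<close> prob_space
    by (simp add: \<beta>_def Int_absorb2 sets.sets_into_space algebra_simps)
qed

lemma kink_point_exists:
  assumes "a \<in> A_minus"
  shows "\<exists>w1. wlow \<le> w1 \<and> w1 < w_fb \<and> c a < u w1"
proof -
  have "a \<in> A" "c a < c astar" using A_minus_D[OF assms] by auto
  define \<theta> where "\<theta> = (c a + c astar) / 2"
  have "u wlow \<le> \<theta>" "\<theta> \<le> u w_fb" "wlow \<le> w_fb"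
    using u_wlow_less_c[OF \<open>a \<in> A\<close>] \<open>c a < c astar\<close> w_fb by (auto simp: \<theta>_def)
  moreover have "continuous_on {wlow..w_fb} u" using continuous_on_u by (rule continuous_on_subset) auto
  ultimately obtain w1 where "wlow \<le> w1" "w1 \<le> w_fb" "u w1 = \<theta>" using IVT'[of u wlow \<theta> w_fb] by blast
  moreover have "w1 \<noteq> w_fb" "c a < \<theta>" using \<open>u w1 = \<theta>\<close> w_fb(2) \<open>c a < c astar\<close> by (auto simp: \<theta>_def)
  ultimately show ?thesis by auto
qed

lemma feasible_low_wage_bound:
  assumes "feasible n w" "a \<in> A" "wlow \<le> w1" "w1 \<le> w_fb"
  defines "Q \<equiv> {z \<in> space nu. w z \<le> w1}"
  shows "u w1 - c a - u' w_fb * ((\<integral>z. w z \<partial>M n astar) - w_fb) \<le> (u w1 - u wlow) * measure (M n a) Q"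
proof -
  interpret prob_space "M n a" using g_prob[OF assms(2)] .
  have [measurable]: "w \<in> borel_measurable nu" and w_ge: "\<And>z. z \<in> space nu \<Longrightarrow> wlow \<le> w z"
    and int_uw: "integrable (M n a) (\<lambda>z. u (w z))"
    and IC: "(\<integral>z. u (w z) \<partial>M n a) - c a \<le> (\<integral>z. u (w z) \<partial>M n astar) - c astar"
    using assms(1,2) unfolding admissible_def by auto
  have "Q \<in> sets nu" unfolding Q_def by measurable
  then have int_Q: "integrable (M n a) (indicator Q :: 'z \<Rightarrow> real)"
    by (intro integrable_real_indicator) (auto simp: emeasure_eq_measure)
  have "u w1 - (u w1 - u wlow) * indicator Q z \<le> u (w z)" if "z \<in> space nu" for z
    using u_mono[OF order.refl w_ge[OF that]] u_mono[OF assms(3), of "w z"] that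
    by (auto simp: Q_def indicator_def)
  then have "(\<integral>z. u w1 - (u w1 - u wlow) * indicator Q z \<partial>M n a) \<le> (\<integral>z. u (w z) \<partial>M n a)"
    using int_uw int_Q by (intro integral_mono) auto
  then have low: "u w1 - (u w1 - u wlow) * measure (M n a) Q \<le> (\<integral>z. u (w z) \<partial>M n a)"
    using int_Q \<open>Q \<in> sets nu\<close> prob_space by (simp add: Int_absorb2 sets.sets_into_space)
  have "0 \<le> (c astar - u' w_fb * (w_fb - w1) - u w1) * measure (M n astar) Q"
    using deriv_mult_le_secant[OF assms(3,4)] w_fb(2) by simp
  then have "(\<integral>z. u (w z) \<partial>M n astar) \<le> c astar + u' w_fb * ((\<integral>z. w z \<partial>M n astar) - w_fb)"
    using expected_utility_plus_kink_le[OF assms(1,3,4)] by (simp add: Q_def)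
  then show ?thesis using low IC by simp
qed

lemma feasible_kink_bound:
  assumes "feasible n w" "wlow \<le> w1" "w1 \<le> w_fb"
  shows "(c astar - u' w_fb * (w_fb - w1) - u w1) * measure (M n astar) {z \<in> space nu. w z \<le> w1}
    \<le> u' w_fb * ((\<integral>z. w z \<partial>M n astar) - w_fb)"
  using expected_utility_plus_kink_le[OF assms] assms(1) unfolding admissible_def by simp

lemma feasible_low_wage_likely_or_costly:
  assumes "feasible n w" "a \<in> A" "wlow \<le> w1" "w1 \<le> w_fb" "c a < u w1"
  shows "(u w1 - c a) / (2 * (u w1 - u wlow)) \<le> measure (M n a) {z \<in> space nu. w z \<le> w1} \<or>
    (u w1 - c a) / (2 * u' w_fb) \<le> (\<integral>z. w z \<partial>M n astar) - w_fb"
proof (rule disjCI)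
  let ?G = "(\<integral>z. w z \<partial>M n astar) - w_fb"
  assume "\<not> (u w1 - c a) / (2 * u' w_fb) \<le> ?G"
  then have "u' w_fb * ?G < (u w1 - c a) / 2" using u'_pos[of w_fb] w_fb(1) by (simp add: field_simps)
  then have "(u w1 - c a) / 2 \<le> measure (M n a) {z \<in> space nu. w z \<le> w1} * (u w1 - u wlow)"
    using feasible_low_wage_bound[OF assms(1-4)] by argo
  moreover have "u wlow < u w1" using u_wlow_less_c[OF assms(2)] assms(5) by simp
  ultimately show "(u w1 - c a) / (2 * (u w1 - u wlow)) \<le> measure (M n a) {z \<in> space nu. w z \<le> w1}"
    using mult_imp_div_pos_le[of "u w1 - u wlow" "(u w1 - c a) / 2"] by simp
qed

lemma feasible_excess_cost_ge:
  fixes a :: 'a and w1 :: real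
  defines "\<eta> \<equiv> (u w1 - c a) / (2 * (u w1 - u wlow))"
    and "\<beta> \<equiv> c astar - u' w_fb * (w_fb - w1) - u w1"
  assumes "feasible n w" "a \<in> A" "wlow \<le> w1" "w1 < w_fb" "c a < u w1" "0 \<le> \<rho>" "\<rho> \<le> 1"
    and transfer: "\<And>Q. Q \<in> sets nu \<Longrightarrow> \<eta> \<le> measure (M n a) Q \<Longrightarrow> \<rho> * (\<eta> / 2) \<le> measure (M n astar) Q"
  shows "w_fb + min ((u w1 - c a) / (2 * u' w_fb)) (\<beta> * \<eta> / (2 * u' w_fb)) * \<rho> \<le> (\<integral>z. w z \<partial>M n astar)"
proof -
  define Q where "Q = {z \<in> space nu. w z \<le> w1}"
  define G where "G = (\<integral>z. w z \<partial>M n astar) - w_fb"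
  define k where "k = u' w_fb"
  have [measurable]: "w \<in> borel_measurable nu" using assms(3) unfolding admissible_def by simp
  have "Q \<in> sets nu" unfolding Q_def by measurable
  have "0 < k" using u'_pos w_fb(1) by (simp add: k_def)
  have "0 < \<beta>" using secant_bounds(1)[OF assms(5,6)] w_fb(2) by (simp add: \<beta>_def)
  consider (costly) "(u w1 - c a) / (2 * k) \<le> G" | (likely) "\<eta> \<le> measure (M n a) Q"
    using feasible_low_wage_likely_or_costly[OF assms(3,4,5) less_imp_le[OF assms(6)] assms(7)]
    unfolding Q_def G_def k_def \<eta>_def by blast
  then have "min ((u w1 - c a) / (2 * k)) (\<beta> * \<eta> / (2 * k)) * \<rho> \<le> G"
  proof cases
    case costly
    have "min ((u w1 - c a) / (2 * k)) (\<beta> * \<eta> / (2 * k)) * \<rho> \<le> (u w1 - c a) / (2 * k) * \<rho>"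
      using \<open>0 \<le> \<rho>\<close> by (intro mult_right_mono) auto
    also have "\<dots> \<le> (u w1 - c a) / (2 * k)"
      using \<open>0 < k\<close> assms(7,9) by (intro mult_left_le) auto
    finally show ?thesis using costly by linarith
  next
    case likely
    have "\<beta> * (\<rho> * (\<eta> / 2)) \<le> \<beta> * measure (M n astar) Q"
      using transfer[OF \<open>Q \<in> sets nu\<close> likely] \<open>0 < \<beta>\<close> by (intro mult_left_mono) auto
    also have "\<dots> \<le> k * G"
      using feasible_kink_bound[OF assms(3,5) less_imp_le[OF assms(6)]] by (simp add: Q_def G_def k_def \<beta>_def)
    finally have "\<beta> * (\<rho> * (\<eta> / 2)) / k \<le> k * G / k"
      using \<open>0 < k\<close> by (intro divide_right_mono) auto
    then have "\<beta> * \<eta> / (2 * k) * \<rho> \<le> G" using \<open>0 < k\<close> by (simp add: ac_simps)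
    moreover have "min ((u w1 - c a) / (2 * k)) (\<beta> * \<eta> / (2 * k)) * \<rho> \<le> \<beta> * \<eta> / (2 * k) * \<rho>"
      using \<open>0 \<le> \<rho>\<close> by (intro mult_right_mono) auto
    ultimately show ?thesis by linarith
  qed
  then show ?thesis by (simp add: G_def k_def)
qed

lemma excess_cost_lower_bound:
  assumes "a \<in> A_minus" "0 < \<delta>"
  shows "\<exists>K>0. eventually (\<lambda>n. \<forall>w. feasible n w \<longrightarrow>
    w_fb + K * exp (real n * (Lhat a a - \<delta>)) \<le> (\<integral>z. w z \<partial>M n astar)) sequentially"
proof -
  have a: "a \<in> A" "a \<noteq> astar" using A_minus_D[OF assms(1)] by auto
  obtain w1 where w1: "wlow \<le> w1" "w1 < w_fb" "c a < u w1" using kink_point_exists[OF assms(1)] by blast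
  define \<eta> where "\<eta> = (u w1 - c a) / (2 * (u w1 - u wlow))"
  define \<beta> where "\<beta> = c astar - u' w_fb * (w_fb - w1) - u w1"
  define K where "K = min ((u w1 - c a) / (2 * u' w_fb)) (\<beta> * \<eta> / (2 * u' w_fb))"
  have "0 < \<eta>" using u_wlow_less_c[OF a(1)] w1(3) by (simp add: \<eta>_def)
  moreover have "0 < \<beta>" using secant_bounds(1)[OF w1(1,2)] w_fb(2) by (simp add: \<beta>_def)
  moreover have "0 < u' w_fb" using u'_pos w_fb(1) by simp
  ultimately have "0 < K" using w1(3) by (simp add: K_def)
  have "eventually (\<lambda>n. \<forall>w. feasible n w \<longrightarrow>
      w_fb + K * exp (real n * (Lhat a a - \<delta>)) \<le> (\<integral>z. w z \<partial>M n astar)) sequentially"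
    using eventually_measure_transfer_to_astar[OF a assms(2) \<open>0 < \<eta>\<close>]
  proof eventually_elim
    case (elim n)
    have "exp (real n * (Lhat a a - \<delta>)) \<le> 1"
      using own_minimizer_neg[OF a] assms(2) by (simp add: mult_nonneg_nonpos)
    then show ?case
      using feasible_excess_cost_ge[OF _ a(1) w1, of n _ "exp (real n * (Lhat a a - \<delta>))"] elim
      by (simp add: K_def \<eta>_def \<beta>_def)
  qed
  with \<open>0 < K\<close> show ?thesis by blast
qed

section \<open>Binary contracts attaining the rate\<close>

lemma binary_contract_feasible:
  assumes "S \<in> sets nu" "wlow \<le> x"
    and IR: "c astar \<le> u x - (u x - u wlow) * measure (M n astar) S"
    and IC: "\<And>b. b \<in> A \<Longrightarrow> b \<noteq> astar \<Longrightarrow> u x - (u x - u wlow) * measure (M n b) S \<le> c b"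
  shows "feasible n (\<lambda>z. if z \<in> S then wlow else x)"
    and "(\<integral>z. (if z \<in> S then wlow else x) \<partial>M n astar) = x - (x - wlow) * measure (M n astar) S"
proof -
  have u_w: "(\<lambda>z. u (if z \<in> S then wlow else x)) = (\<lambda>z. if z \<in> S then u wlow else u x)"
    by (simp add: fun_eq_iff)
  have [measurable]: "S \<in> sets nu" by fact
  have int_const: "integrable (M n b) (\<lambda>z. if z \<in> S then C1 else C2)"
    "(\<integral>z. (if z \<in> S then C1 else C2) \<partial>M n b) = C2 - (C2 - C1) * measure (M n b) S"
    if "b \<in> A" for b and C1 C2 :: real
    using integral_if_const[OF g_prob[of b n], of S C1 C2] that assms(1) by simp_all
  show "(\<integral>z. (if z \<in> S then wlow else x) \<partial>M n astar) = x - (x - wlow) * measure (M n astar) S"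
    using int_const(2)[OF astarA] .
  have "(\<integral>z. (if z \<in> S then u wlow else u x) \<partial>M n b) - c b
      \<le> (\<integral>z. (if z \<in> S then u wlow else u x) \<partial>M n astar) - c astar" if "b \<in> A" for b
    using IC[OF that] IR int_const(2)[OF that] int_const(2)[OF astarA] by (cases "b = astar") auto
  then show "feasible n (\<lambda>z. if z \<in> S then wlow else x)"
    unfolding admissible_def u_w using assms(2) IR int_const[OF astarA] int_const by auto
qed

lemma binary_deviation_utility_le_cost:
  assumes \<gamma>: "\<And>b. b \<in> A \<Longrightarrow> c astar < c b \<Longrightarrow> c astar + \<gamma> \<le> c b"
    and \<epsilon>: "\<And>b. b \<in> A_minus \<Longrightarrow> u wlow + (c astar + \<gamma> - u wlow) * \<epsilon> \<le> c b"
    and y: "c astar \<le> y" "y \<le> c astar + \<gamma>"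
    and S: "\<And>b. b \<in> A_minus \<Longrightarrow> 1 - \<epsilon> \<le> measure (M n b) S"
    and b: "b \<in> A" "b \<noteq> astar"
  shows "y - (y - u wlow) * measure (M n b) S \<le> c b"
proof -
  interpret prob_space "M n b" using g_prob[OF b(1)] .
  have "0 \<le> y - u wlow" using y(1) u_wlow_less_c[OF astarA] by simp
  consider "c astar < c b" | "b \<in> A_minus"
    using c_distinct[OF b] b(1) by (force simp: A_minus_def)
  then show ?thesis
  proof cases
    case 1
    then show ?thesis using \<gamma>[OF b(1)] y(2) \<open>0 \<le> y - u wlow\<close> by (smt (verit) measure_nonneg mult_nonneg_nonneg)
  next
    case 2
    have "(y - u wlow) * (1 - measure (M n b) S) \<le> (c astar + \<gamma> - u wlow) * \<epsilon>"
      using S[OF 2] y(2) \<open>0 \<le> y - u wlow\<close> prob_le_1 by (intro mult_mono) auto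
    then show ?thesis using \<epsilon>[OF 2] by (simp add: algebra_simps)
  qed
qed

lemma binary_contract_of_event:
  assumes \<gamma>: "{c astar..c astar + \<gamma>} \<subseteq> u ` {wlow..}" "\<And>b. b \<in> A \<Longrightarrow> c astar < c b \<Longrightarrow> c astar + \<gamma> \<le> c b"
    and \<epsilon>: "\<epsilon> \<le> 1" "\<And>b. b \<in> A_minus \<Longrightarrow> u wlow + (c astar + \<gamma> - u wlow) * \<epsilon> \<le> c b"
    and xmax: "wlow \<le> xmax" "u xmax = c astar + \<gamma>"
    and S: "S \<in> sets nu" "\<And>b. b \<in> A_minus \<Longrightarrow> 1 - \<epsilon> < measure (M n b) S"
    and p: "measure (M n astar) S < 1 / 2" "2 * measure (M n astar) S * (c astar - u wlow) \<le> \<gamma>"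
  shows "\<exists>w. feasible n w \<and> card (w ` space nu) = 2 \<and>
    u' xmax * ((\<integral>z. w z \<partial>M n astar) - w_fb) \<le> 2 * measure (M n astar) S * (c astar - u wlow)"
proof -
  interpret Ps: prob_space "M n astar" using g_prob[OF astarA] .
  define p where "p = measure (M n astar) S"
  obtain y where y: "y - (y - u wlow) * p = c astar" "c astar \<le> y" "y - c astar \<le> 2 * p * (c astar - u wlow)"
    using exists_binary_utility_level[of p "u wlow" "c astar"] p(1) u_wlow_less_c[OF astarA]
    by (auto simp: p_def)
  then have "y \<in> u ` {wlow..}" using \<gamma>(1) p(2) by (auto simp: p_def)
  then obtain x where x: "wlow \<le> x" "u x = y" by auto
  have "w_fb \<le> x" using u_le_iff[OF less_imp_le[OF w_fb(1)] x(1)] w_fb(2) x(2) y(2) by simp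
  have "x \<le> xmax" using u_le_iff[OF x(1) xmax(1)] xmax(2) x(2) y(3) p(2) by (simp add: p_def)
  define w where "w = (\<lambda>z. if z \<in> S then wlow else x)"
  have IC: "y - (y - u wlow) * measure (M n b) S \<le> c b" if "b \<in> A" "b \<noteq> astar" for b
    using binary_deviation_utility_le_cost[OF \<gamma>(2) \<epsilon>(2) y(2) _ _ that] S(2) y(3) p(2)
    by (force simp: p_def)
  have feasible: "feasible n w" and cost: "(\<integral>z. w z \<partial>M n astar) = x - (x - wlow) * p"
    using binary_contract_feasible[OF S(1) x(1)] IC y(1) x(2) by (auto simp: w_def p_def)
  obtain b where "b \<in> A_minus" using A_minus_nonempty by blast
  then have "0 < measure (M n b) S" using S(2)[of b] \<epsilon>(1) by linarith
  then have "S \<noteq> {}" by auto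
  then have "S \<inter> space nu \<noteq> {}" using sets.sets_into_space[OF S(1)] by blast
  moreover have "space nu - S \<noteq> {}"
  proof
    assume "space nu - S = {}"
    then have "S = space nu" using sets.sets_into_space[OF S(1)] by auto
    then show False using p(1) Ps.prob_space by simp
  qed
  moreover have "wlow \<noteq> x" using x(2) y(2) u_wlow_less_c[OF astarA] by auto
  ultimately have "card (w ` space nu) = 2" unfolding w_def by (rule card_image_if_eq_2)
  moreover have "u' xmax * ((\<integral>z. w z \<partial>M n astar) - w_fb) \<le> 2 * p * (c astar - u wlow)"
  proof -
    have "(\<integral>z. w z \<partial>M n astar) \<le> x" using cost x(1) by (simp add: p_def)
    then have "u' xmax * ((\<integral>z. w z \<partial>M n astar) - w_fb) \<le> u' xmax * (x - w_fb)"
      using u'_pos[OF xmax(1)] by simp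
    also have "\<dots> \<le> u x - u w_fb" using deriv_mult_wage_gap_le \<open>w_fb \<le> x\<close> \<open>x \<le> xmax\<close> w_fb(1) by simp
    finally show ?thesis using x(2) w_fb(2) y(3) by simp
  qed
  ultimately show ?thesis using feasible by (auto simp: p_def)
qed

lemma upper_utility_slack:
  "\<exists>\<gamma>>0. {c astar..c astar + \<gamma>} \<subseteq> u ` {wlow..} \<and> (\<forall>b\<in>A. c astar < c b \<longrightarrow> c astar + \<gamma> \<le> c b)"
proof -
  obtain e where "e > 0" and e: "ball (c astar) e \<subseteq> u ` {wlow..}"
    using c_range astarA mem_interior by (metis image_subset_iff)
  define H where "H = {b \<in> A. c astar < c b}"
  define \<gamma> where "\<gamma> = Min (insert (e / 2) ((\<lambda>b. c b - c astar) ` H))"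
  have "finite H" using finA by (simp add: H_def)
  then have "0 < \<gamma>" using \<open>e > 0\<close> by (auto simp: \<gamma>_def H_def)
  have "\<gamma> \<le> e / 2" unfolding \<gamma>_def by (rule Min.coboundedI) (use \<open>finite H\<close> in auto)
  then have "{c astar..c astar + \<gamma>} \<subseteq> ball (c astar) e"
    using \<open>0 < \<gamma>\<close> by (auto simp: dist_real_def)
  then have "{c astar..c astar + \<gamma>} \<subseteq> u ` {wlow..}" using e by blast
  moreover have "c astar + \<gamma> \<le> c b" if "b \<in> A" "c astar < c b" for b
  proof -
    have "\<gamma> \<le> c b - c astar"
      unfolding \<gamma>_def by (rule Min.coboundedI) (use \<open>finite H\<close> that in \<open>auto simp: H_def\<close>)
    then show ?thesis by simp
  qed
  ultimately show ?thesis using \<open>0 < \<gamma>\<close> by blast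
qed

lemma lower_utility_slack:
  assumes "0 < \<gamma>"
  shows "\<exists>\<epsilon>>0. \<epsilon> \<le> 1 \<and> (\<forall>b\<in>A_minus. u wlow + (c astar + \<gamma> - u wlow) * \<epsilon> \<le> c b)"
proof -
  define \<epsilon> where "\<epsilon> = Min (insert 1 ((\<lambda>b. (c b - u wlow) / (c astar + \<gamma> - u wlow)) ` A_minus))"
  have pos: "0 < c astar + \<gamma> - u wlow" using u_wlow_less_c[OF astarA] assms by simp
  have "0 < \<epsilon>"
    unfolding \<epsilon>_def using finite_A_minus pos u_wlow_less_c A_minus_D by auto
  have "\<epsilon> \<le> 1" unfolding \<epsilon>_def by (rule Min.coboundedI) (use finite_A_minus in auto)
  have "u wlow + (c astar + \<gamma> - u wlow) * \<epsilon> \<le> c b" if "b \<in> A_minus" for b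
  proof -
    have "\<epsilon> \<le> (c b - u wlow) / (c astar + \<gamma> - u wlow)"
      unfolding \<epsilon>_def by (rule Min.coboundedI) (use finite_A_minus that in auto)
    then show ?thesis using pos by (simp add: le_divide_eq algebra_simps)
  qed
  then show ?thesis using \<open>0 < \<epsilon>\<close> \<open>\<epsilon> \<le> 1\<close> by blast
qed

lemma measure_typical_union_le:
  assumes "0 < n"
  shows "measure (M n astar) (\<Union>a\<in>A_minus. score_event n a {Lhat a a - \<delta> <..< Lhat a a + \<delta>})
    \<le> card A_minus * exp (real n * (Lmax + \<delta>))"
proof -
  interpret prob_space "M n astar" using g_prob[OF astarA] .
  have "measure (M n astar) (\<Union>a\<in>A_minus. score_event n a {Lhat a a - \<delta> <..< Lhat a a + \<delta>})
      \<le> (\<Sum>a\<in>A_minus. measure (M n astar) (score_event n a {Lhat a a - \<delta> <..< Lhat a a + \<delta>}))"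
    using finite_A_minus A_minus_D score_event_sets
    by (intro measure_subadditive_finite) (auto simp: emeasure_eq_measure)
  also have "\<dots> \<le> (\<Sum>a\<in>A_minus. exp (real n * (Lmax + \<delta>)))"
  proof (rule sum_mono)
    fix a assume "a \<in> A_minus"
    then have "measure (M n astar) (score_event n a {Lhat a a - \<delta> <..< Lhat a a + \<delta>})
        \<le> exp (real n * (Lhat a a + \<delta>))"
      using A_minus_D[OF \<open>a \<in> A_minus\<close>] by (intro measure_near_own_minimizer_le_exp assms) auto
    also have "\<dots> \<le> exp (real n * (Lmax + \<delta>))"
      using Lmax_ge[OF \<open>a \<in> A_minus\<close>] by (simp add: mult_left_mono)
    finally show "measure (M n astar) (score_event n a {Lhat a a - \<delta> <..< Lhat a a + \<delta>})
        \<le> exp (real n * (Lmax + \<delta>))" .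
  qed
  finally show ?thesis by simp
qed

lemma eventually_typical_for_all_cheaper:
  assumes "0 < \<delta>" "0 < \<epsilon>"
  shows "eventually (\<lambda>n. \<forall>b\<in>A_minus. 1 - \<epsilon> <
    measure (M n b) (\<Union>a\<in>A_minus. score_event n a {Lhat a a - \<delta> <..< Lhat a a + \<delta>})) sequentially"
proof (rule eventually_ball_finite[OF finite_A_minus], rule ballI)
  fix b assume "b \<in> A_minus"
  then have b: "b \<in> A" "b \<noteq> astar" using A_minus_D by auto
  show "eventually (\<lambda>n. 1 - \<epsilon> <
    measure (M n b) (\<Union>a\<in>A_minus. score_event n a {Lhat a a - \<delta> <..< Lhat a a + \<delta>})) sequentially"
    using eventually_score_near_minimizer[OF b assms]
  proof eventually_elim
    case (elim n)
    have "measure (M n b) (score_event n b {Lhat b b - \<delta> <..< Lhat b b + \<delta>})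
        \<le> measure (M n b) (\<Union>a\<in>A_minus. score_event n a {Lhat a a - \<delta> <..< Lhat a a + \<delta>})"
      using g_prob[OF b(1)] \<open>b \<in> A_minus\<close> finite_A_minus A_minus_D score_event_sets
      by (intro finite_measure.finite_measure_mono prob_space.finite_measure) auto
    then show ?case using elim by simp
  qed
qed

lemma binary_contract_of_small_event:
  obtains K p0 \<epsilon> where "0 < K" "0 < p0" "0 < \<epsilon>"
    "\<And>n S. S \<in> sets nu \<Longrightarrow> measure (M n astar) S < p0 \<Longrightarrow>
      (\<And>b. b \<in> A_minus \<Longrightarrow> 1 - \<epsilon> < measure (M n b) S) \<Longrightarrow>
      \<exists>w. feasible n w \<and> card (w ` space nu) = 2 \<and>
        (\<integral>z. w z \<partial>M n astar) \<le> w_fb + K * measure (M n astar) S"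
proof -
  obtain \<gamma> where "0 < \<gamma>" and \<gamma>: "{c astar..c astar + \<gamma>} \<subseteq> u ` {wlow..}"
    "\<And>b. b \<in> A \<Longrightarrow> c astar < c b \<Longrightarrow> c astar + \<gamma> \<le> c b"
    using upper_utility_slack by blast
  obtain \<epsilon> where "0 < \<epsilon>" "\<epsilon> \<le> 1" and \<epsilon>: "\<And>b. b \<in> A_minus \<Longrightarrow> u wlow + (c astar + \<gamma> - u wlow) * \<epsilon> \<le> c b"
    using lower_utility_slack[OF \<open>0 < \<gamma>\<close>] by blast
  have "c astar + \<gamma> \<in> u ` {wlow..}" using \<gamma>(1) \<open>0 < \<gamma>\<close> by auto
  then obtain xmax where xmax: "wlow \<le> xmax" "u xmax = c astar + \<gamma>" by auto
  define K where "K = 2 * (c astar - u wlow) / u' xmax"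
  define p0 where "p0 = min (1 / 2) (\<gamma> / (2 * (c astar - u wlow)))"
  have "0 < c astar - u wlow" using u_wlow_less_c[OF astarA] by simp
  have "0 < u' xmax" using u'_pos xmax(1) by simp
  have "0 < K" using \<open>0 < c astar - u wlow\<close> \<open>0 < u' xmax\<close> by (simp add: K_def)
  have "0 < p0" using \<open>0 < \<gamma>\<close> \<open>0 < c astar - u wlow\<close> by (simp add: p0_def)
  show ?thesis
  proof (rule that[OF \<open>0 < K\<close> \<open>0 < p0\<close> \<open>0 < \<epsilon>\<close>])
    fix n S
    assume S: "S \<in> sets nu" "measure (M n astar) S < p0" "\<And>b. b \<in> A_minus \<Longrightarrow> 1 - \<epsilon> < measure (M n b) S"
    have "measure (M n astar) S < 1 / 2" "2 * measure (M n astar) S * (c astar - u wlow) \<le> \<gamma>"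
      using S(2) \<open>0 < c astar - u wlow\<close> by (simp_all add: p0_def field_simps)
    then obtain w where w: "feasible n w" "card (w ` space nu) = 2"
      "u' xmax * ((\<integral>z. w z \<partial>M n astar) - w_fb) \<le> 2 * measure (M n astar) S * (c astar - u wlow)"
      using binary_contract_of_event[OF \<gamma> \<open>\<epsilon> \<le> 1\<close> \<epsilon> xmax S(1) S(3)] by blast
    moreover have "(\<integral>z. w z \<partial>M n astar) - w_fb \<le> K * measure (M n astar) S"
      using w(3) \<open>0 < u' xmax\<close> by (simp add: K_def field_simps)
    ultimately show "\<exists>w. feasible n w \<and> card (w ` space nu) = 2 \<and>
        (\<integral>z. w z \<partial>M n astar) \<le> w_fb + K * measure (M n astar) S"
      by auto
  qed
qed

lemma excess_cost_upper_bound: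
  assumes "0 < \<delta>" "Lmax + \<delta> < 0"
  shows "\<exists>K>0. eventually (\<lambda>n. \<exists>w. feasible n w \<and> card (w ` space nu) = 2 \<and>
    (\<integral>z. w z \<partial>M n astar) \<le> w_fb + K * exp (real n * (Lmax + \<delta>))) sequentially"
proof -
  obtain K p0 \<epsilon> where "0 < K" "0 < p0" "0 < \<epsilon>" and contract: "\<And>n S. S \<in> sets nu \<Longrightarrow>
      measure (M n astar) S < p0 \<Longrightarrow> (\<And>b. b \<in> A_minus \<Longrightarrow> 1 - \<epsilon> < measure (M n b) S) \<Longrightarrow>
      \<exists>w. feasible n w \<and> card (w ` space nu) = 2 \<and>
        (\<integral>z. w z \<partial>M n astar) \<le> w_fb + K * measure (M n astar) S"
    using binary_contract_of_small_event by blast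
  define N where "N = real (card A_minus)"
  have "0 < N" using finite_A_minus A_minus_nonempty by (simp add: N_def card_gt_0_iff)
  have "eventually (\<lambda>n. exp (real n * (Lmax + \<delta>)) < p0 / N) sequentially"
    using assms(2) \<open>0 < p0\<close> \<open>0 < N\<close> by (intro eventually_exp_less) auto
  then have "eventually (\<lambda>n. \<exists>w. feasible n w \<and> card (w ` space nu) = 2 \<and>
    (\<integral>z. w z \<partial>M n astar) \<le> w_fb + K * N * exp (real n * (Lmax + \<delta>))) sequentially"
    using eventually_typical_for_all_cheaper[OF assms(1) \<open>0 < \<epsilon>\<close>] eventually_gt_at_top[of 0]
  proof eventually_elim
    case (elim n)
    let ?S = "\<Union>a\<in>A_minus. score_event n a {Lhat a a - \<delta> <..< Lhat a a + \<delta>}"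
    have "?S \<in> sets nu" using finite_A_minus A_minus_D score_event_sets by auto
    have p: "measure (M n astar) ?S \<le> N * exp (real n * (Lmax + \<delta>))"
      using measure_typical_union_le[OF elim(3)] by (simp add: N_def)
    also have "\<dots> < p0" using elim(1) \<open>0 < N\<close> by (simp add: field_simps)
    finally obtain w where w: "feasible n w" "card (w ` space nu) = 2"
      "(\<integral>z. w z \<partial>M n astar) \<le> w_fb + K * measure (M n astar) ?S"
      using contract[OF \<open>?S \<in> sets nu\<close>] elim(2) by blast
    moreover have "K * measure (M n astar) ?S \<le> K * N * exp (real n * (Lmax + \<delta>))"
      using mult_left_mono[OF p less_imp_le[OF \<open>0 < K\<close>]] by (simp add: mult.assoc)
    ultimately have "(\<integral>z. w z \<partial>M n astar) \<le> w_fb + K * N * exp (real n * (Lmax + \<delta>))" by linarith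
    then show ?case using w(1,2) by blast
  qed
  moreover have "0 < K * N" using \<open>0 < K\<close> \<open>0 < N\<close> by simp
  ultimately show ?thesis by blast
qed

lemma C_SB_le_C_bin: "C_SB nu g A astar wlow u c n \<le> C_bin nu g A astar wlow u c n"
  unfolding C_SB_def C_bin_def by (rule INF_superset_mono) auto

lemma C_SB_lower_bound:
  assumes "0 < \<delta>"
  shows "\<exists>K>0. eventually (\<lambda>n. ereal (w_fb + K * exp (real n * (Lmax - \<delta>)))
    \<le> C_SB nu g A astar wlow u c n) sequentially"
proof -
  obtain a where a: "a \<in> A_minus" "Lhat a a = Lmax" using Lmax_attained by blast
  obtain K where "0 < K" and bound: "eventually (\<lambda>n. \<forall>w. feasible n w \<longrightarrow>
      w_fb + K * exp (real n * (Lhat a a - \<delta>)) \<le> (\<integral>z. w z \<partial>M n astar)) sequentially"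
    using excess_cost_lower_bound[OF a(1) assms] by blast
  from bound have "eventually (\<lambda>n. ereal (w_fb + K * exp (real n * (Lmax - \<delta>)))
      \<le> C_SB nu g A astar wlow u c n) sequentially"
    by eventually_elim (use a(2) in \<open>auto simp: C_SB_def intro!: INF_greatest\<close>)
  with \<open>0 < K\<close> show ?thesis by blast
qed

lemma C_bin_upper_bound:
  assumes "0 < \<delta>" "\<delta> < - Lmax"
  shows "\<exists>K>0. eventually (\<lambda>n. C_bin nu g A astar wlow u c n
    \<le> ereal (w_fb + K * exp (real n * (Lmax + \<delta>)))) sequentially"
proof -
  obtain K where "0 < K" and bound: "eventually (\<lambda>n. \<exists>w. feasible n w \<and> card (w ` space nu) = 2 \<and>
      (\<integral>z. w z \<partial>M n astar) \<le> w_fb + K * exp (real n * (Lmax + \<delta>))) sequentially"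
    using excess_cost_upper_bound assms by force
  from bound have "eventually (\<lambda>n. C_bin nu g A astar wlow u c n
      \<le> ereal (w_fb + K * exp (real n * (Lmax + \<delta>)))) sequentially"
    by eventually_elim (auto simp: C_bin_def intro: INF_lower2)
  with \<open>0 < K\<close> show ?thesis by blast
qed

lemma C_SB_upper_bound:
  assumes "0 < \<delta>" "\<delta> < - Lmax"
  shows "\<exists>K>0. eventually (\<lambda>n. C_SB nu g A astar wlow u c n
    \<le> ereal (w_fb + K * exp (real n * (Lmax + \<delta>)))) sequentially"
proof -
  obtain K where "0 < K" and bound: "eventually (\<lambda>n. C_bin nu g A astar wlow u c n
      \<le> ereal (w_fb + K * exp (real n * (Lmax + \<delta>)))) sequentially"
    using C_bin_upper_bound[OF assms] by blast
  from bound have "eventually (\<lambda>n. C_SB nu g A astar wlow u c n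
      \<le> ereal (w_fb + K * exp (real n * (Lmax + \<delta>)))) sequentially"
    by (rule eventually_mono) (rule order.trans[OF C_SB_le_C_bin])
  with \<open>0 < K\<close> show ?thesis by blast
qed

lemma C_bin_lower_bound:
  assumes "0 < \<delta>"
  shows "\<exists>K>0. eventually (\<lambda>n. ereal (w_fb + K * exp (real n * (Lmax - \<delta>)))
    \<le> C_bin nu g A astar wlow u c n) sequentially"
proof -
  obtain K where "0 < K" and bound: "eventually (\<lambda>n. ereal (w_fb + K * exp (real n * (Lmax - \<delta>)))
      \<le> C_SB nu g A astar wlow u c n) sequentially"
    using C_SB_lower_bound[OF assms] by blast
  from bound have "eventually (\<lambda>n. ereal (w_fb + K * exp (real n * (Lmax - \<delta>)))
      \<le> C_bin nu g A astar wlow u c n) sequentially"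
    by (rule eventually_mono) (rule order.trans[OF _ C_SB_le_C_bin])
  with \<open>0 < K\<close> show ?thesis by blast
qed

end

theorem theorem4:
  fixes A :: "'a set" and astar :: 'a
    and nu :: "'z measure" and g :: "nat \<Rightarrow> 'a \<Rightarrow> 'z \<Rightarrow> real"
    and I :: "'a \<Rightarrow> 'a \<Rightarrow> real \<Rightarrow> ereal" and Lhat :: "'a \<Rightarrow> 'a \<Rightarrow> real"
    and wlow :: real and u u' u'' :: "real \<Rightarrow> real" and c :: "'a \<Rightarrow> real"
  assumes finA: "finite A" and astarA: "astar \<in> A"
    and sfin: "sigma_finite_measure nu"
    and g_meas: "\<And>n a. a \<in> A \<Longrightarrow> g n a \<in> borel_measurable nu"
    and g_nonneg: "\<And>n a z. a \<in> A \<Longrightarrow> z \<in> space nu \<Longrightarrow> 0 \<le> g n a z"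
    and g_prob: "\<And>n a. a \<in> A \<Longrightarrow> prob_space (mon nu g n a)"
    and score_wd: "\<And>n a a'. a \<in> A \<Longrightarrow> a' \<in> A \<Longrightarrow> a' \<noteq> astar \<Longrightarrow>
        AE z in mon nu g n a. 0 < g n astar z \<and> 0 < g n a' z"
    and LD: "\<And>a a' B. a \<in> A \<Longrightarrow> a' \<in> A \<Longrightarrow> a' \<noteq> astar \<Longrightarrow> B \<in> sets borel \<Longrightarrow>
        - (INF l \<in> interior B. I a a' l) \<le> liminf (ld_rate nu g astar a a' B) \<and>
        limsup (ld_rate nu g astar a a' B) \<le> - (INF l \<in> closure B. I a a' l)"
    and I_nonneg: "\<And>a a' l. a \<in> A \<Longrightarrow> a' \<in> A \<Longrightarrow> a' \<noteq> astar \<Longrightarrow> 0 \<le> I a a' l"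
    and Lhat_min: "\<And>a a' l. a \<in> A \<Longrightarrow> a' \<in> A \<Longrightarrow> a' \<noteq> astar \<Longrightarrow>
        I a a' (Lhat a a') \<le> I a a' l"
    and Lhat_unique: "\<And>a a' l. a \<in> A \<Longrightarrow> a' \<in> A \<Longrightarrow> a' \<noteq> astar \<Longrightarrow>
        (\<forall>l'. I a a' l \<le> I a a' l') \<Longrightarrow> l = Lhat a a'"
    and ident: "\<And>a b a'. a \<in> A \<Longrightarrow> b \<in> A \<Longrightarrow> a' \<in> A \<Longrightarrow> a' \<noteq> astar \<Longrightarrow>
        a \<noteq> b \<Longrightarrow> Lhat a a' \<noteq> Lhat b a'"
    and level_compact: "\<And>a a' t. a \<in> A \<Longrightarrow> a' \<in> A \<Longrightarrow> a' \<noteq> astar \<Longrightarrow>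
        compact {l. I a a' l \<le> ereal t}"
    and cont1: "\<And>a'. a' \<in> A \<Longrightarrow> a' \<noteq> astar \<Longrightarrow> isCont (I astar a') (Lhat a' a')"
    and cont2: "\<And>a'. a' \<in> A \<Longrightarrow> a' \<noteq> astar \<Longrightarrow> isCont (I astar a') (Lhat astar a')"
    and u_d1: "\<And>w. wlow \<le> w \<Longrightarrow> (u has_real_derivative u' w) (at w within {wlow..})"
    and u_d2: "\<And>w. wlow \<le> w \<Longrightarrow> (u' has_real_derivative u'' w) (at w within {wlow..})"
    and u_C2: "continuous_on {wlow..} u''"
    and u'_pos: "\<And>w. wlow \<le> w \<Longrightarrow> 0 < u' w"
    and u''_neg: "\<And>w. wlow \<le> w \<Longrightarrow> u'' w < 0"
    and u'_lim: "(u' \<longlongrightarrow> 0) at_top"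
    and c_range: "c ` A \<subseteq> interior (u ` {wlow..})"
    and c_some: "\<exists>a\<in>A. c a < c astar"
    and c_distinct: "\<And>a. a \<in> A \<Longrightarrow> a \<noteq> astar \<Longrightarrow> c a \<noteq> c astar"
  shows "exp_rate (\<lambda>n. C_SB nu g A astar wlow u c n - ereal (C_FB wlow u c astar))
            (Min ((\<lambda>a. I astar a (Lhat a a)) ` {a \<in> A. c a < c astar})) \<and>
         exp_rate (\<lambda>n. C_bin nu g A astar wlow u c n - ereal (C_FB wlow u c astar))
            (Min ((\<lambda>a. I astar a (Lhat a a)) ` {a \<in> A. c a < c astar}))"
proof -
  interpret agency A astar nu g I Lhat wlow u u' u'' c
    by (intro agency.intro monitoring.intro concave_utility.intro agency_axioms.intro) (fact+)
  have "0 < - Lmax" using Lmax_neg by simp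
  have "exp_rate (\<lambda>n. C_SB nu g A astar wlow u c n - ereal w_fb) (ereal (- Lmax))"
    using exp_rate_of_bounds[OF \<open>0 < - Lmax\<close> C_SB_lower_bound C_SB_upper_bound] .
  moreover have "exp_rate (\<lambda>n. C_bin nu g A astar wlow u c n - ereal w_fb) (ereal (- Lmax))"
    using exp_rate_of_bounds[OF \<open>0 < - Lmax\<close> C_bin_lower_bound C_bin_upper_bound] .
  ultimately show ?thesis by (simp add: rate_Min_eq w_fb_def)
qed

end
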